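(* Consider the $2\times2\times M$ model described in the context (an analogue of the gonihedric model with cyclic closure in the transverse directions), with real parameters $J_1,J_2,J_3$ and temperature $T>0$. Let $\lambda_{\max}$ be the largest real root of the characteristic equation of the $4\times4$ matrix $\tau$ and $\mu_{\max}$ the largest real root of the characteristic equation of the $3\times3$ matrix $\tau'$ (defined in the context). Then the free energy per site $f(T)=-k_BT\lim_{M\to\infty}\frac{1}{4M}\ln Z_M$ equals $-\frac{k_BT}{4}\ln\lambda_{\max}$, the internal energy per site $u=-T^2\partial_T[f/T]$ equals $k_BT^2\partial_T[\frac14\ln\lambda_{\max}]$, the heat capacity per site $C=\partial_Tu$ equals $2k_BT\partial_T[\frac14\ln\lambda_{\max}]+k_BT^2\partial_T^2[\frac14\ln\lambda_{\max}]$, and the non-percolation probability satisfies $\lim_{M\to\infty}\frac{\ln(Z'_M/Z_M)}{M}=\ln\frac{\mu_{\max}}{\lambda_{\max}}$.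
   Context: Sites $t_i^m$, $i\in\{0,1,2,3\}$ (indices mod 4), $m\in\{0,\dots,M-1\}$, cyclically closed in $m$, spins $\sigma_i^m\in\{-1,1\}$. The cube energy is $$\mathcal H^m=-\sum_{r=0}^3\Big(J_1\big[\sigma_r^m\sigma_{r+1}^m+\sigma_r^{m+1}\sigma_{r+1}^{m+1}+\sigma_r^m\sigma_r^{m+1}\big]+J_2\big[\tfrac38\sigma_r^m\sigma_{r+2}^m+\tfrac38\sigma_r^{m+1}\sigma_{r+2}^{m+1}+\sigma_r^m\sigma_{r+1}^{m+1}+\sigma_r^m\sigma_{r-1}^{m+1}\big]+J_3\big[\tfrac{3}{16}\textstyle\prod_i\sigma_i^m+\tfrac{3}{16}\prod_i\sigma_i^{m+1}+\sigma_r^m\sigma_{r+1}^m\sigma_r^{m+1}\sigma_{r+1}^{m+1}\big]\Big),$$ i.e. the couplings $J_{\{t_0^m,t_1^m\}}=J_{\{t_0^{m+1},t_1^{m+1}\}}=J_{\{t_0^m,t_0^{m+1}\}}=J_1$, $\frac83J_{\{t_0^m,t_2^m\}}=\frac83J_{\{t_0^{m+1},t_2^{m+1}\}}=J_{\{t_0^m,t_1^{m+1}\}}=J_{\{t_0^m,t_3^{m+1}\}}=J_2$, $\frac{16}{3}J_{\{t_0^m,\dots,t_3^m\}}=\frac{16}{3}J_{\{t_0^{m+1},\dots,t_3^{m+1}\}}=J_{\{t_0^m,t_1^m,t_0^{m+1},t_1^{m+1}\}}=J_3$, each summed over the four rotations $i\mapsto i+r$. $\mathcal H=\sum_m\mathcal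 H^m$, $Z_M=\sum_\sigma e^{-\mathcal H/(k_BT)}$ over all $\sigma\in\{-1,1\}^{4M}$; $Z'_M$ is the same sum restricted to configurations with no $m,r$ such that $\sigma_r^m=\sigma_{r+1}^m=-1$. Transfer matrices: index a layer state $(s_0,\dots,s_3)$ by $k=1+\sum_i2^i(1-s_i)/2$; $\theta_{k,l}=\exp(-\mathcal H^m/(k_BT))$ with layer $m$ in state $k$, layer $m+1$ in state $l$. $\tau_{i,j}=\sum_{l\in G_j}\theta_{r_i,l}$, $(r_i)=(1,2,4,6)$, $G_1=\{1,16\}$, $G_2=\{2,3,5,8,9,12,14,15\}$, $G_3=\{4,7,10,13\}$, $G_4=\{6,11\}$; $\tau'_{i,j}=\sum_{l\in G'_j}\theta_{r'_i,l}$, $(r'_i)=(1,2,6)$, $G'_1=\{1\}$, $G'_2=\{2,3,5,9\}$, $G'_3=\{6,11\}$. *)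

theory Defs
  imports "HOL-Analysis.Analysis" "Jordan_Normal_Form.Char_Poly"
begin

definition cube_energy :: "real \<Rightarrow> real \<Rightarrow> real \<Rightarrow> (nat \<Rightarrow> real) \<Rightarrow> (nat \<Rightarrow> real) \<Rightarrow> real" where
  "cube_energy J1 J2 J3 a b = - (\<Sum>r<4.
      J1 * (a r * a ((r+1) mod 4) + b r * b ((r+1) mod 4) + a r * b r)
    + J2 * (3/8 * a r * a ((r+2) mod 4) + 3/8 * b r * b ((r+2) mod 4)
            + a r * b ((r+1) mod 4) + a r * b ((r+3) mod 4))
    + J3 * (3/16 * (\<Prod>i<4. a i) + 3/16 * (\<Prod>i<4. b i)
            + a r * a ((r+1) mod 4) * b r * b ((r+1) mod 4)))"

definition configs :: "nat \<Rightarrow> (nat \<times> nat \<Rightarrow> real) set" where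
  "configs M = ({..<4} \<times> {..<M}) \<rightarrow>\<^sub>E {-1, 1}"

definition layer :: "nat \<Rightarrow> (nat \<times> nat \<Rightarrow> real) \<Rightarrow> nat \<Rightarrow> (nat \<Rightarrow> real)" where
  "layer M \<sigma> m = (\<lambda>i. \<sigma> (i mod 4, m mod M))"

definition hamiltonian :: "real \<Rightarrow> real \<Rightarrow> real \<Rightarrow> nat \<Rightarrow> (nat \<times> nat \<Rightarrow> real) \<Rightarrow> real" where
  "hamiltonian J1 J2 J3 M \<sigma> =
     (\<Sum>m<M. cube_energy J1 J2 J3 (layer M \<sigma> m) (layer M \<sigma> (m+1)))"

definition partition_fn :: "real \<Rightarrow> real \<Rightarrow> real \<Rightarrow> real \<Rightarrow> nat \<Rightarrow> real \<Rightarrow> real" where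
  "partition_fn kB J1 J2 J3 M T =
     (\<Sum>\<sigma>\<in>configs M. exp (- hamiltonian J1 J2 J3 M \<sigma> / (kB * T)))"

definition nonperc_configs :: "nat \<Rightarrow> (nat \<times> nat \<Rightarrow> real) set" where
  "nonperc_configs M = {\<sigma> \<in> configs M.
     \<not> (\<exists>m<M. \<exists>r<4. \<sigma> (r, m) = -1 \<and> \<sigma> ((r+1) mod 4, m) = -1)}"

definition partition_fn' :: "real \<Rightarrow> real \<Rightarrow> real \<Rightarrow> real \<Rightarrow> nat \<Rightarrow> real \<Rightarrow> real" where
  "partition_fn' kB J1 J2 J3 M T =
     (\<Sum>\<sigma>\<in>nonperc_configs M. exp (- hamiltonian J1 J2 J3 M \<sigma> / (kB * T)))"

(* layer state k in {1..16}: k = 1 + sum_i 2^i (1 - s_i)/2, i.e. s_i = -1 iff bit i of k-1 is set *)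
definition state_spin :: "nat \<Rightarrow> nat \<Rightarrow> real" where
  "state_spin k i = (if odd ((k - 1) div 2 ^ (i mod 4)) then -1 else 1)"

definition theta :: "real \<Rightarrow> real \<Rightarrow> real \<Rightarrow> real \<Rightarrow> real \<Rightarrow> nat \<Rightarrow> nat \<Rightarrow> real" where
  "theta kB J1 J2 J3 T k l = exp (- cube_energy J1 J2 J3 (state_spin k) (state_spin l) / (kB * T))"

definition rows_tau :: "nat list" where "rows_tau = [1, 2, 4, 6]"
definition groups_tau :: "nat set list" where
  "groups_tau = [{1,16}, {2,3,5,8,9,12,14,15}, {4,7,10,13}, {6,11}]"
definition rows_tau' :: "nat list" where "rows_tau' = [1, 2, 6]"
definition groups_tau' :: "nat set list" where
  "groups_tau' = [{1}, {2,3,5,9}, {6,11}]"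

(* tau_{i,j} (1-based in the paper) as a 4x4 matrix with 0-based indices *)
definition tau_mat :: "real \<Rightarrow> real \<Rightarrow> real \<Rightarrow> real \<Rightarrow> real \<Rightarrow> real mat" where
  "tau_mat kB J1 J2 J3 T = mat 4 4 (\<lambda>(i, j).
      \<Sum>l\<in>groups_tau ! j. theta kB J1 J2 J3 T (rows_tau ! i) l)"

definition tau'_mat :: "real \<Rightarrow> real \<Rightarrow> real \<Rightarrow> real \<Rightarrow> real \<Rightarrow> real mat" where
  "tau'_mat kB J1 J2 J3 T = mat 3 3 (\<lambda>(i, j).
      \<Sum>l\<in>groups_tau' ! j. theta kB J1 J2 J3 T (rows_tau' ! i) l)"

definition largest_real_eig :: "real mat \<Rightarrow> real" where
  "largest_real_eig A = Max {x. poly (char_poly A) x = 0}"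

definition lambda_max :: "real \<Rightarrow> real \<Rightarrow> real \<Rightarrow> real \<Rightarrow> real \<Rightarrow> real" where
  "lambda_max kB J1 J2 J3 T = largest_real_eig (tau_mat kB J1 J2 J3 T)"

definition mu_max :: "real \<Rightarrow> real \<Rightarrow> real \<Rightarrow> real \<Rightarrow> real \<Rightarrow> real" where
  "mu_max kB J1 J2 J3 T = largest_real_eig (tau'_mat kB J1 J2 J3 T)"

definition free_energy :: "real \<Rightarrow> real \<Rightarrow> real \<Rightarrow> real \<Rightarrow> real \<Rightarrow> real" where
  "free_energy kB J1 J2 J3 T =
     - kB * T * lim (\<lambda>M. ln (partition_fn kB J1 J2 J3 M T) / (4 * real M))"

definition internal_energy :: "real \<Rightarrow> real \<Rightarrow> real \<Rightarrow> real \<Rightarrow> real \<Rightarrow> real" where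
  "internal_energy kB J1 J2 J3 T = - (T ^ 2) * deriv (\<lambda>t. free_energy kB J1 J2 J3 t / t) T"

definition heat_capacity :: "real \<Rightarrow> real \<Rightarrow> real \<Rightarrow> real \<Rightarrow> real \<Rightarrow> real" where
  "heat_capacity kB J1 J2 J3 T = deriv (internal_energy kB J1 J2 J3) T"

end

(*
  The transfer matrix Theta = (theta k l) on the 16 layer states is strictly positive, and
  Z_M = tr (Theta ^ M) (resp. Z'_M, for the restriction of Theta to the 7 non-percolating states).
  A positive eigenvector v of Theta with eigenvalue r squeezes the diagonal of Theta ^ (n + 1)
  between constant multiples of r ^ n, so ln Z_M / M tends to ln r.  Rotating a layer and flipping
  all its spins leave the cube energy invariant, and the groups G_j (resp. G'_j) are the orbits of
  these symmetries; hence the row sums of Theta over a group depend only on the group of the row,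
  and a positive eigenvector of tau (resp. tau') lifts to one of Theta.  By the Perron-Frobenius
  argument the corresponding eigenvalue is the largest real root lambda_max (resp. mu_max) of the
  characteristic polynomial.  This root is simple (Jacobi's formula), so implicit differentiation
  shows that lambda_max is differentiable in T with a differentiable derivative, which yields the
  formulas for the internal energy and the heat capacity.
*)
theory Submission
  imports Defs
begin

section \<open>Perron--Frobenius theory for positive matrices\<close>

definition positive_eigenvector :: "nat \<Rightarrow> (nat \<Rightarrow> nat \<Rightarrow> real) \<Rightarrow> real \<Rightarrow> (nat \<Rightarrow> real) \<Rightarrow> bool" where
  "positive_eigenvector n a r v \<longleftrightarrow> (\<forall>i<n. v i > 0) \<and> (\<forall>i<n. (\<Sum>j<n. a i j * v j) = r * v i)"

no_notation vec_index (infixl \<open>$\<close> 100)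

lemma probability_simplex_compact_convex:
  defines "S \<equiv> {x::real^'n. (\<forall>i. 0 \<le> x$i) \<and> (\<Sum>i\<in>UNIV. x$i) = 1}"
  shows "compact S" and "convex S" and "S \<noteq> {}"
proof -
  have "bounded S"
    unfolding bounded_iff
  proof (intro exI ballI)
    fix x assume x: "x \<in> S"
    have "norm x \<le> (\<Sum>i\<in>UNIV. \<bar>x$i\<bar>)" by (rule norm_le_l1_cart)
    also have "\<dots> = 1" using x by (auto simp: S_def)
    finally show "norm x \<le> 1" .
  qed
  moreover have "closed S"
    unfolding S_def
    by (intro closed_Collect_conj closed_Collect_all closed_Collect_le closed_Collect_eq continuous_intros)
  ultimately show "compact S" by (simp add: compact_eq_bounded_closed)
  show "convex S"
    unfolding convex_def
  proof (intro ballI allI impI)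
    fix x y :: "real^'n" and u v :: real
    assume x: "x \<in> S" and y: "y \<in> S" and uv: "0 \<le> u" "0 \<le> v" "u + v = 1"
    have "(\<Sum>i\<in>UNIV. (u *\<^sub>R x + v *\<^sub>R y)$i) = u * (\<Sum>i\<in>UNIV. x$i) + v * (\<Sum>i\<in>UNIV. y$i)"
      by (simp add: sum.distrib sum_distrib_left)
    also have "\<dots> = 1" using x y uv by (simp add: S_def)
    finally show "u *\<^sub>R x + v *\<^sub>R y \<in> S" using x y uv by (simp add: S_def)
  qed
  have "(\<chi> i. 1 / real CARD('n)) \<in> S" by (simp add: S_def)
  then show "S \<noteq> {}" by blast
qed

lemma positive_matrix_mult_simplex_pos:
  fixes a :: "'n::finite \<Rightarrow> 'n \<Rightarrow> real"
  assumes pos: "\<And>i j. a i j > 0" and nonneg: "\<forall>j. 0 \<le> x$j" and sum1: "(\<Sum>j\<in>UNIV. x$j) = 1"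
  shows "(\<Sum>j\<in>UNIV. a i j * x$j) > 0"
proof -
  obtain j0 where j0: "x$j0 > 0"
  proof (rule ccontr)
    assume "\<not> thesis"
    with that have "\<forall>j. x$j \<le> 0" by (meson not_le)
    then have "(\<Sum>j\<in>UNIV. x$j) \<le> 0" by (simp add: sum_nonpos)
    with sum1 show False by simp
  qed
  have "a i j0 * x$j0 \<le> (\<Sum>j\<in>UNIV. a i j * x$j)"
    by (rule member_le_sum) (auto intro!: mult_nonneg_nonneg less_imp_le[OF pos] simp: nonneg)
  moreover have "a i j0 * x$j0 > 0" using pos j0 by simp
  ultimately show ?thesis by linarith
qed

text \<open>Brouwer's fixed point theorem for the map \<open>x \<mapsto> A x / \<parallel>A x\<parallel>\<^sub>1\<close> of the standard simplex.\<close>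

lemma positive_matrix_has_positive_eigenvector:
  fixes a :: "'n::finite \<Rightarrow> 'n \<Rightarrow> real"
  assumes pos: "\<And>i j. a i j > 0"
  shows "\<exists>x r. r > 0 \<and> (\<forall>i. x i > 0) \<and> (\<forall>i. (\<Sum>j\<in>UNIV. a i j * x j) = r * x i)"
proof -
  define S where "S = {x::real^'n. (\<forall>i. 0 \<le> x$i) \<and> (\<Sum>i\<in>UNIV. x$i) = 1}"
  define N where "N x = (\<Sum>i\<in>UNIV. \<Sum>j\<in>UNIV. a i j * x$j)" for x :: "real^'n"
  define f where "f x = (\<chi> i. (\<Sum>j\<in>UNIV. a i j * x$j) / N x)" for x
  have row_pos: "(\<Sum>j\<in>UNIV. a i j * x$j) > 0" if "x \<in> S" for x i
    using that pos by (intro positive_matrix_mult_simplex_pos) (auto simp: S_def)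
  have N_pos: "N x > 0" if "x \<in> S" for x
    unfolding N_def by (rule sum_pos) (auto intro: row_pos[OF that])
  have S: "compact S" "convex S" "S \<noteq> {}"
    unfolding S_def by (fact probability_simplex_compact_convex)+
  have "continuous_on S f"
    unfolding f_def N_def
    by (intro continuous_intros; use N_pos[unfolded N_def] in fastforce)
  moreover have "f \<in> S \<rightarrow> S"
  proof
    fix x assume x: "x \<in> S"
    have "(\<Sum>i\<in>UNIV. f x $ i) = (\<Sum>i\<in>UNIV. \<Sum>j\<in>UNIV. a i j * x$j) / N x"
      by (simp add: f_def sum_divide_distrib)
    also have "\<dots> = 1" using N_pos[OF x] by (simp add: N_def)
    finally show "f x \<in> S" using N_pos[OF x] row_pos[OF x]
      by (auto simp: S_def f_def less_imp_le)
  qed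
  ultimately obtain x where x: "x \<in> S" and fx: "f x = x" using brouwer[OF S] by blast
  have eq: "(\<Sum>j\<in>UNIV. a i j * x$j) = N x * x$i" for i
  proof -
    have "x$i = (\<Sum>j\<in>UNIV. a i j * x$j) / N x" using fx by (metis f_def vec_lambda_beta)
    then show ?thesis using N_pos[OF x] by (simp add: field_simps)
  qed
  have "x$i > 0" for i
  proof -
    have "N x * x$i > 0" using eq row_pos[OF x] by metis
    then show ?thesis using N_pos[OF x] by (simp add: zero_less_mult_iff)
  qed
  then show ?thesis using N_pos[OF x] eq by blast
qed

no_notation vec_nth (infixl \<open>$\<close> 90)
notation vec_index (infixl \<open>$\<close> 100)

lemma positive_eigenvector_exists:
  assumes card: "CARD('n::finite) = n" and pos: "\<And>i j. i < n \<Longrightarrow> j < n \<Longrightarrow> a i j > 0"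
  shows "\<exists>r v. r > 0 \<and> positive_eigenvector n a r v"
proof -
  obtain h where h: "bij_betw h (UNIV::'n set) {..<n}"
    using ex_bij_betw_finite_nat[of "UNIV::'n set"] card by (auto simp: atLeast0LessThan)
  have h_lt: "h i < n" for i using h by (auto simp: bij_betw_def)
  obtain x r where r: "r > 0" and x: "\<forall>i. x i > 0"
    and eq: "\<forall>i. (\<Sum>j\<in>UNIV. a (h i) (h j) * x j) = r * x i"
    using positive_matrix_has_positive_eigenvector[of "\<lambda>i j. a (h i) (h j)"] pos h_lt by blast
  define g where "g = the_inv_into UNIV h"
  have hg: "h (g k) = k" if "k < n" for k
    unfolding g_def using h that by (simp add: f_the_inv_into_f_bij_betw)
  have gh: "g (h i) = i" for i
    unfolding g_def using h by (simp add: bij_betw_def the_inv_into_f_f)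
  have "(\<Sum>j<n. a k j * x (g j)) = r * x (g k)" if "k < n" for k
  proof -
    have "(\<Sum>j<n. a k j * x (g j)) = (\<Sum>j\<in>UNIV. a k (h j) * x (g (h j)))"
      by (rule sum.reindex_bij_betw[OF h, symmetric])
    also have "\<dots> = (\<Sum>j\<in>UNIV. a (h (g k)) (h j) * x j)"
      by (simp only: gh hg[OF that])
    also have "\<dots> = r * x (g k)" using eq by simp
    finally show ?thesis .
  qed
  with r x show ?thesis
    unfolding positive_eigenvector_def by (intro exI[of _ r] exI[of _ "\<lambda>j. x (g j)"]) simp
qed

lemma left_eigenvector_pairing:
  assumes "positive_eigenvector n (\<lambda>i j. a j i) r u"
  shows "(\<Sum>i<n. u i * (\<Sum>j<n. a i j * z j)) = r * (\<Sum>i<n. u i * z i)"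
proof -
  have "(\<Sum>i<n. u i * (\<Sum>j<n. a i j * z j)) = (\<Sum>j<n. z j * (\<Sum>i<n. a i j * u i))"
    by (simp add: sum_distrib_left mult_ac) (rule sum.swap)
  also have "\<dots> = r * (\<Sum>i<n. u i * z i)"
    using assms by (simp add: positive_eigenvector_def sum_distrib_left mult_ac)
  finally show ?thesis .
qed

lemma positive_pairing_pos:
  fixes u z :: "nat \<Rightarrow> real"
  assumes "\<forall>i<n. u i > 0" "\<forall>i<n. z i \<ge> 0" "\<exists>i<n. z i > 0"
  shows "(\<Sum>i<n. u i * z i) > 0"
proof -
  obtain k where k: "k < n" "z k > 0" using assms(3) by blast
  have "u k * z k \<le> (\<Sum>i<n. u i * z i)"
    by (rule member_le_sum) (use k assms in \<open>auto intro: mult_nonneg_nonneg less_imp_le\<close>)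
  moreover have "u k * z k > 0" using k assms(1) by simp
  ultimately show ?thesis by linarith
qed

text \<open>Collatz--Wielandt bounds: pair the inequality with a positive left eigenvector.\<close>

lemma collatz_wielandt_le:
  assumes u: "positive_eigenvector n (\<lambda>i j. a j i) r u"
    and z: "\<forall>i<n. z i \<ge> 0" "\<exists>i<n. z i > 0"
    and sub: "\<forall>i<n. x * z i \<le> (\<Sum>j<n. a i j * z j)"
  shows "x \<le> r"
proof -
  have u_pos: "\<forall>i<n. u i > 0" using u by (simp add: positive_eigenvector_def)
  have "x * (\<Sum>i<n. u i * z i) = (\<Sum>i<n. u i * (x * z i))" by (simp add: sum_distrib_left mult_ac)
  also have "\<dots> \<le> (\<Sum>i<n. u i * (\<Sum>j<n. a i j * z j))"
    by (rule sum_mono) (use u_pos sub in \<open>auto intro: mult_left_mono less_imp_le\<close>)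
  also have "\<dots> = r * (\<Sum>i<n. u i * z i)" by (rule left_eigenvector_pairing[OF u])
  finally show ?thesis using positive_pairing_pos[OF u_pos z] by simp
qed

lemma collatz_wielandt_less:
  assumes u: "positive_eigenvector n (\<lambda>i j. a j i) r u"
    and z: "\<forall>i<n. z i \<ge> 0" "\<exists>i<n. z i > 0"
    and sub: "\<forall>i<n. x * z i \<le> (\<Sum>j<n. a i j * z j)"
    and strict: "k < n" "x * z k < (\<Sum>j<n. a k j * z j)"
  shows "x < r"
proof -
  have u_pos: "\<forall>i<n. u i > 0" using u by (simp add: positive_eigenvector_def)
  have "x * (\<Sum>i<n. u i * z i) = (\<Sum>i<n. u i * (x * z i))" by (simp add: sum_distrib_left mult_ac)
  also have "\<dots> < (\<Sum>i<n. u i * (\<Sum>j<n. a i j * z j))"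
    by (rule sum_strict_mono_ex1) (use u_pos sub strict in \<open>auto intro: mult_left_mono less_imp_le\<close>)
  also have "\<dots> = r * (\<Sum>i<n. u i * z i)" by (rule left_eigenvector_pairing[OF u])
  finally show ?thesis using positive_pairing_pos[OF u_pos z] by simp
qed

lemma positive_eigenvalues_eq:
  assumes n: "n > 0" and v: "positive_eigenvector n a r v"
    and u: "positive_eigenvector n (\<lambda>i j. a j i) r' u"
  shows "r = r'"
proof (rule antisym)
  have v_pos: "\<forall>i<n. v i > 0" and v_eq: "\<forall>i<n. (\<Sum>j<n. a i j * v j) = r * v i"
    using v by (auto simp: positive_eigenvector_def)
  have u_pos: "\<forall>i<n. u i > 0" and u_eq: "\<forall>i<n. (\<Sum>j<n. a j i * u j) = r' * u i"
    using u by (auto simp: positive_eigenvector_def)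
  have "\<exists>i<n. v i > 0" "\<exists>i<n. u i > 0" using n v_pos u_pos by blast+
  then show "r \<le> r'" "r' \<le> r"
    using v v_pos v_eq u_pos u_eq
    by (auto intro!: collatz_wielandt_le[OF u, where z = v]
        collatz_wielandt_le[of n "\<lambda>i j. a j i" r v u r'])
qed

lemma perron_eigenvectors_exist:
  assumes card: "CARD('n::finite) = n" and pos: "\<And>i j. i < n \<Longrightarrow> j < n \<Longrightarrow> a i j > 0"
  shows "\<exists>r v u. r > 0 \<and> positive_eigenvector n a r v \<and> positive_eigenvector n (\<lambda>i j. a j i) r u"
proof -
  obtain r v where "r > 0" and v: "positive_eigenvector n a r v"
    using positive_eigenvector_exists[OF card, of a] pos by blast
  moreover obtain r' u where u: "positive_eigenvector n (\<lambda>i j. a j i) r' u"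
    using positive_eigenvector_exists[OF card, of "\<lambda>i j. a j i"] pos by blast
  moreover have "n > 0" using card by auto
  ultimately show ?thesis using positive_eigenvalues_eq[OF _ v u] by blast
qed

lemma char_poly_root_eigenvector:
  assumes "poly (char_poly (mat n n (\<lambda>(i,j). a i j))) \<mu> = 0"
  obtains y :: "real vec" where "\<exists>i<n. y $ i \<noteq> 0"
    and "\<And>i. i < n \<Longrightarrow> (\<Sum>j<n. a i j * y $ j) = \<mu> * y $ i"
proof -
  let ?A = "mat n n (\<lambda>(i,j). a i j)"
  have A: "?A \<in> carrier_mat n n" by simp
  have "eigenvalue ?A \<mu>" using assms eigenvalue_root_char_poly[OF A] by simp
  then obtain y where "eigenvector ?A y \<mu>" unfolding eigenvalue_def by blast
  then have y: "y \<in> carrier_vec n" and y0: "y \<noteq> 0\<^sub>v n" and ey: "?A *\<^sub>v y = \<mu> \<cdot>\<^sub>v y"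
    unfolding eigenvector_def by auto
  have "\<exists>i<n. y $ i \<noteq> 0"
  proof (rule ccontr)
    assume "\<not> ?thesis"
    then have "y = 0\<^sub>v n" using y by (intro eq_vecI) auto
    with y0 show False by simp
  qed
  moreover have "(\<Sum>j<n. a i j * y $ j) = \<mu> * y $ i" if "i < n" for i
  proof -
    have "(?A *\<^sub>v y) $ i = (\<mu> \<cdot>\<^sub>v y) $ i" using ey by simp
    then show ?thesis using that y by (simp add: scalar_prod_def atLeast0LessThan)
  qed
  ultimately show ?thesis using that by blast
qed

lemma eigenvector_abs_subinvariant:
  fixes b a :: "nat \<Rightarrow> nat \<Rightarrow> real"
  assumes "\<And>j. j < n \<Longrightarrow> \<bar>b i j\<bar> \<le> a i j" and "(\<Sum>j<n. b i j * y j) = \<mu> * y i"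
  shows "\<bar>\<mu>\<bar> * \<bar>y i\<bar> \<le> (\<Sum>j<n. a i j * \<bar>y j\<bar>)"
proof -
  have "\<bar>\<mu>\<bar> * \<bar>y i\<bar> = \<bar>\<Sum>j<n. b i j * y j\<bar>" using assms(2) by (simp add: abs_mult)
  also have "\<dots> \<le> (\<Sum>j<n. \<bar>b i j\<bar> * \<bar>y j\<bar>)" by (rule order.trans[OF sum_abs]) (simp add: abs_mult)
  also have "\<dots> \<le> (\<Sum>j<n. a i j * \<bar>y j\<bar>)" by (rule sum_mono) (simp add: assms(1) mult_right_mono)
  finally show ?thesis .
qed

lemma char_poly_root_abs_le:
  assumes nonneg: "\<And>i j. i < n \<Longrightarrow> j < n \<Longrightarrow> a i j \<ge> 0"
    and u: "positive_eigenvector n (\<lambda>i j. a j i) r u"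
    and root: "poly (char_poly (mat n n (\<lambda>(i,j). a i j))) \<mu> = 0"
  shows "\<bar>\<mu>\<bar> \<le> r"
proof -
  obtain y :: "real vec" where y0: "\<exists>i<n. y $ i \<noteq> 0"
    and ey: "\<And>i. i < n \<Longrightarrow> (\<Sum>j<n. a i j * y $ j) = \<mu> * y $ i"
    using char_poly_root_eigenvector[OF root] by blast
  show ?thesis
  proof (rule collatz_wielandt_le[OF u, where z = "\<lambda>i. \<bar>y $ i\<bar>"])
    show "\<forall>i<n. \<bar>\<mu>\<bar> * \<bar>y $ i\<bar> \<le> (\<Sum>j<n. a i j * \<bar>y $ j\<bar>)"
      using nonneg ey by (auto intro!: eigenvector_abs_subinvariant[where b = a and y = "\<lambda>j. y $ j"])
  qed (use y0 in auto)
qed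

lemma positive_eigenvector_char_poly_root:
  assumes n: "n > 0" and v: "positive_eigenvector n a r v"
  shows "poly (char_poly (mat n n (\<lambda>(i,j). a i j))) r = 0"
proof -
  let ?A = "mat n n (\<lambda>(i,j). a i j)"
  have A: "?A \<in> carrier_mat n n" by simp
  have "eigenvector ?A (vec n v) r"
    unfolding eigenvector_def
  proof (intro conjI)
    show "vec n v \<in> carrier_vec (dim_row ?A)" by simp
    show "vec n v \<noteq> 0\<^sub>v (dim_row ?A)"
    proof
      assume "vec n v = 0\<^sub>v (dim_row ?A)"
      then have "vec n v $ 0 = 0\<^sub>v n $ 0" by simp
      moreover have "v 0 > 0" using n v by (simp add: positive_eigenvector_def)
      ultimately show False using n by simp
    qed
    show "?A *\<^sub>v vec n v = r \<cdot>\<^sub>v vec n v"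
      using v by (intro eq_vecI) (auto simp: positive_eigenvector_def scalar_prod_def atLeast0LessThan)
  qed
  then have "eigenvalue ?A r" unfolding eigenvalue_def by blast
  then show ?thesis using eigenvalue_root_char_poly[OF A] by simp
qed

lemma largest_real_eig_eq_perron_root:
  assumes n: "n > 0" and nonneg: "\<And>i j. i < n \<Longrightarrow> j < n \<Longrightarrow> a i j \<ge> 0"
    and v: "positive_eigenvector n a r v" and u: "positive_eigenvector n (\<lambda>i j. a j i) r u"
  shows "largest_real_eig (mat n n (\<lambda>(i,j). a i j)) = r"
  unfolding largest_real_eig_def
proof (rule Max_eqI)
  have "char_poly (mat n n (\<lambda>(i,j). a i j)) \<noteq> 0"
    using degree_monic_char_poly[of "mat n n (\<lambda>(i,j). a i j)" n] by auto
  then show "finite {x. poly (char_poly (mat n n (\<lambda>(i,j). a i j))) x = 0}"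
    by (rule poly_roots_finite)
  show "r \<in> {x. poly (char_poly (mat n n (\<lambda>(i,j). a i j))) x = 0}"
    using positive_eigenvector_char_poly_root[OF n v] by simp
  fix y assume "y \<in> {x. poly (char_poly (mat n n (\<lambda>(i,j). a i j))) x = 0}"
  then have "\<bar>y\<bar> \<le> r" using char_poly_root_abs_le[OF nonneg u] by simp
  then show "y \<le> r" by simp
qed

theorem largest_real_eig_positive_matrix:
  assumes card: "CARD('n::finite) = n" and pos: "\<And>i j. i < n \<Longrightarrow> j < n \<Longrightarrow> a i j > 0"
  obtains v u where "largest_real_eig (mat n n (\<lambda>(i,j). a i j)) > 0"
    and "positive_eigenvector n a (largest_real_eig (mat n n (\<lambda>(i,j). a i j))) v"
    and "positive_eigenvector n (\<lambda>i j. a j i) (largest_real_eig (mat n n (\<lambda>(i,j). a i j))) u"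
proof -
  obtain r v u where "r > 0" and v: "positive_eigenvector n a r v"
    and u: "positive_eigenvector n (\<lambda>i j. a j i) r u"
    using perron_eigenvectors_exist[OF card, of a] pos by blast
  moreover have "largest_real_eig (mat n n (\<lambda>(i,j). a i j)) = r"
    using card pos by (intro largest_real_eig_eq_perron_root[OF _ _ v u]) (auto intro: less_imp_le)
  ultimately show ?thesis using that by simp
qed

lemma mat_erase_mat:
  "mat_erase (mat n n (\<lambda>(i,j). a i j)) k k = mat n n (\<lambda>(i,j). if i = k \<or> j = k then 0 else a i j)"
  by (rule eq_matI) (auto simp: mat_erase_def)

text \<open>An eigenvector of the principal submatrix vanishes at the deleted index, which makes
  the Collatz--Wielandt inequality strict there.\<close>

lemma principal_submatrix_char_poly_no_root:
  assumes pos: "\<And>i j. i < n \<Longrightarrow> j < n \<Longrightarrow> a i j > 0"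
    and u: "positive_eigenvector n (\<lambda>i j. a j i) r u" and r: "r > 0"
    and k: "k < n" and x: "x \<ge> r"
  shows "poly (char_poly (mat_erase (mat n n (\<lambda>(i,j). a i j)) k k)) x \<noteq> 0"
proof
  let ?b = "\<lambda>i j. if i = k \<or> j = k then 0 else a i j"
  assume "poly (char_poly (mat_erase (mat n n (\<lambda>(i,j). a i j)) k k)) x = 0"
  then obtain y :: "real vec" where y0: "\<exists>i<n. y $ i \<noteq> 0"
    and ey: "\<And>i. i < n \<Longrightarrow> (\<Sum>j<n. ?b i j * y $ j) = x * y $ i"
    using char_poly_root_eigenvector[of n ?b x] unfolding mat_erase_mat by blast
  have "y $ k = 0" using ey[OF k] x r by simp
  moreover have "(\<Sum>j<n. a k j * \<bar>y $ j\<bar>) > 0"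
    using pos k y0 by (intro positive_pairing_pos) auto
  moreover have "\<bar>x\<bar> * \<bar>y $ i\<bar> \<le> (\<Sum>j<n. a i j * \<bar>y $ j\<bar>)" if "i < n" for i
    using pos that ey[OF that]
    by (intro eigenvector_abs_subinvariant[where b = ?b]) (auto intro: less_imp_le)
  ultimately have "\<bar>x\<bar> < r"
    using y0 k by (intro collatz_wielandt_less[OF u, where z = "\<lambda>i. \<bar>y $ i\<bar>" and k = k]) auto
  with x show False by simp
qed

lemma principal_submatrix_char_poly_pos:
  assumes pos: "\<And>i j. i < n \<Longrightarrow> j < n \<Longrightarrow> a i j > 0"
    and u: "positive_eigenvector n (\<lambda>i j. a j i) r u" and r: "r > 0" and k: "k < n"
  shows "poly (char_poly (mat_erase (mat n n (\<lambda>(i,j). a i j)) k k)) r > 0"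
proof (rule ccontr)
  let ?q = "char_poly (mat_erase (mat n n (\<lambda>(i,j). a i j)) k k)"
  assume "\<not> ?thesis"
  then have "poly ?q r \<le> 0" by simp
  moreover have "lead_coeff ?q = 1"
    using degree_monic_char_poly[of "mat_erase (mat n n (\<lambda>(i,j). a i j)) k k" n] by simp
  then obtain N where "\<forall>x\<ge>N. poly ?q x \<ge> 1" using poly_pinfty_gt_lc[of ?q] by auto
  then have "poly ?q (max N r) \<ge> 0" by (meson max.cobounded1 order_trans zero_le_one)
  ultimately have "\<exists>x. r \<le> x \<and> x \<le> max N r \<and> poly ?q x = 0"
    by (intro IVT') (auto intro!: continuous_intros)
  then show False using principal_submatrix_char_poly_no_root[OF pos u r k] by blast
qed

text \<open>The Perron root is a simple root: by Jacobi's formula the derivative of the characteristic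
  polynomial is the sum of the characteristic polynomials of the principal submatrices.\<close>

lemma pderiv_char_poly_perron_root_pos:
  assumes n: "n > 0" and pos: "\<And>i j. i < n \<Longrightarrow> j < n \<Longrightarrow> a i j > 0"
    and u: "positive_eigenvector n (\<lambda>i j. a j i) r u" and r: "r > 0"
  shows "poly (pderiv (char_poly (mat n n (\<lambda>(i,j). a i j)))) r > 0"
proof -
  let ?A = "mat n n (\<lambda>(i,j). a i j)"
  have "?A \<in> carrier_mat n n" by simp
  then have "poly (monom 1 1 * pderiv (char_poly ?A)) r = poly (\<Sum>i<n. char_poly (mat_erase ?A i i)) r"
    by (simp only: pderiv_char_poly_mat_erase)
  then have "r * poly (pderiv (char_poly ?A)) r = (\<Sum>i<n. poly (char_poly (mat_erase ?A i i)) r)"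
    by (simp add: poly_monom poly_sum)
  also have "\<dots> > 0"
    using n principal_submatrix_char_poly_pos[OF pos u r] by (intro sum_pos) auto
  finally show ?thesis using r by (simp add: zero_less_mult_iff)
qed

section \<open>Smooth dependence of the Perron root on a parameter\<close>

text \<open>Leibniz expansions of \<open>det (x I - A(s))\<close>, of its divided difference in \<open>x\<close> and of its
  partial derivative in \<open>s\<close>: as explicit polynomials in \<open>x\<close> and the entries \<open>a i j s\<close>, their
  continuity and differentiability are evident.\<close>

definition char_entry :: "(nat \<Rightarrow> nat \<Rightarrow> real \<Rightarrow> real) \<Rightarrow> real \<Rightarrow> real \<Rightarrow> nat \<Rightarrow> nat \<Rightarrow> real" where
  "char_entry a s x i j = of_bool (i = j) * x - a i j s"

definition char_det :: "nat \<Rightarrow> (nat \<Rightarrow> nat \<Rightarrow> real \<Rightarrow> real) \<Rightarrow> real \<Rightarrow> real \<Rightarrow> real" where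
  "char_det n a s x =
     (\<Sum>p\<in>{p. p permutes {0..<n}}. signof p * (\<Prod>i\<in>{0..<n}. char_entry a s x i (p i)))"

definition char_det_slope :: "nat \<Rightarrow> (nat \<Rightarrow> nat \<Rightarrow> real \<Rightarrow> real) \<Rightarrow> real \<Rightarrow> real \<Rightarrow> real \<Rightarrow> real" where
  "char_det_slope n a s x y = (\<Sum>p\<in>{p. p permutes {0..<n}}. signof p *
      (\<Sum>k<n. (\<Prod>i<k. char_entry a s y i (p i)) * of_bool (k = p k)
              * (\<Prod>i\<in>{Suc k..<n}. char_entry a s x i (p i))))"

definition char_det_dparam ::
  "nat \<Rightarrow> (nat \<Rightarrow> nat \<Rightarrow> real \<Rightarrow> real) \<Rightarrow> (nat \<Rightarrow> nat \<Rightarrow> real \<Rightarrow> real) \<Rightarrow> real \<Rightarrow> real \<Rightarrow> real" where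
  "char_det_dparam n a a' s x = (\<Sum>p\<in>{p. p permutes {0..<n}}. signof p *
      (\<Sum>k\<in>{0..<n}. - a' k (p k) s * (\<Prod>i\<in>{0..<n}-{k}. char_entry a s x i (p i))))"

lemma permutes_less:
  fixes p :: "nat \<Rightarrow> nat"
  assumes "p permutes {0..<n}"
  shows "\<forall>i<n. p i < n"
proof (intro allI impI)
  fix i assume "i < n"
  then show "p i < n" using permutes_in_image[OF assms, of i] by simp
qed

lemma poly_char_poly_eq_char_det:
  "poly (char_poly (mat n n (\<lambda>(i,j). a i j s))) x = char_det n a s x"
proof -
  let ?A = "mat n n (\<lambda>(i,j). a i j s)"
  have A: "?A \<in> carrier_mat n n" by simp
  then have C: "- char_matrix ?A x \<in> carrier_mat n n" by simp
  have "(- char_matrix ?A x) $$ (i, p i) = char_entry a s x i (p i)"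
    if "p permutes {0..<n}" "i \<in> {0..<n}" for p i
    using that permutes_in_image[OF that(1)] by (simp add: char_matrix_def char_entry_def)
  then show ?thesis
    unfolding char_poly_matrix[OF A] det_def'[OF C] char_det_def
    by (intro sum.cong refl arg_cong2[where f = "(*)"] prod.cong) auto
qed

lemma prod_diff_telescope:
  fixes f g :: "nat \<Rightarrow> 'a::comm_ring_1"
  shows "(\<Prod>i<n. f i) - (\<Prod>i<n. g i)
    = (\<Sum>k<n. (\<Prod>i<k. g i) * (f k - g k) * (\<Prod>i\<in>{Suc k..<n}. f i))"
proof (induction n)
  case 0
  then show ?case by simp
next
  case (Suc n)
  have "(\<Prod>i<Suc n. f i) - (\<Prod>i<Suc n. g i)
      = ((\<Prod>i<n. f i) - (\<Prod>i<n. g i)) * f n + (\<Prod>i<n. g i) * (f n - g n)"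
    by (simp add: algebra_simps)
  also have "\<dots> = (\<Sum>k<n. (\<Prod>i<k. g i) * (f k - g k) * ((\<Prod>i\<in>{Suc k..<n}. f i) * f n))
      + (\<Prod>i<n. g i) * (f n - g n)"
    by (simp add: Suc.IH sum_distrib_right mult.assoc)
  also have "\<dots> = (\<Sum>k<Suc n. (\<Prod>i<k. g i) * (f k - g k) * (\<Prod>i\<in>{Suc k..<Suc n}. f i))"
    by (simp add: prod.atLeastLessThan_Suc)
  finally show ?case .
qed

lemma char_det_diff: "char_det n a s x - char_det n a s y = (x - y) * char_det_slope n a s x y"
proof -
  have entry_diff: "char_entry a s x k (p k) - char_entry a s y k (p k) = (x - y) * of_bool (k = p k)"
    for p k by (simp add: char_entry_def algebra_simps)
  have "char_det n a s x - char_det n a s y = (\<Sum>p\<in>{p. p permutes {0..<n}}. signof p *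
      ((\<Prod>i<n. char_entry a s x i (p i)) - (\<Prod>i<n. char_entry a s y i (p i))))"
    unfolding char_det_def by (simp add: sum_subtractf right_diff_distrib atLeast0LessThan)
  also have "\<dots> = (x - y) * char_det_slope n a s x y"
    unfolding char_det_slope_def prod_diff_telescope entry_diff sum_distrib_left
    by (intro sum.cong refl) (simp add: mult_ac)
  finally show ?thesis .
qed

lemma char_det_has_derivative_param:
  assumes "\<And>i j. i < n \<Longrightarrow> j < n \<Longrightarrow> (a i j has_real_derivative a' i j s) (at s)"
  shows "((\<lambda>s. char_det n a s x) has_real_derivative char_det_dparam n a a' s x) (at s)"
  unfolding char_det_def char_det_dparam_def char_entry_def
  by (intro DERIV_sum DERIV_cmult has_field_derivative_prod)
    (auto dest!: permutes_less intro!: derivative_eq_intros assms)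

lemma char_det_slope_isCont:
  assumes "\<And>i j. i < n \<Longrightarrow> j < n \<Longrightarrow> isCont (a i j) t" "isCont X t" "isCont Y t"
  shows "isCont (\<lambda>s. char_det_slope n a s (X s) (Y s)) t"
  unfolding char_det_slope_def char_entry_def
  by (intro continuous_intros assms(2,3)) (auto dest!: permutes_less intro!: assms(1))

lemma char_det_slope_diag:
  "char_det_slope n a s x x = poly (pderiv (char_poly (mat n n (\<lambda>(i,j). a i j s)))) x"
proof -
  have "isCont (\<lambda>z. char_det_slope n a s z x) x"
    unfolding char_det_slope_def char_entry_def by (intro continuous_intros)
  then have "((\<lambda>x. char_det n a s x) has_real_derivative char_det_slope n a s x x) (at x)"
    unfolding CARAT_DERIV
    by (intro exI[of _ "\<lambda>z. char_det_slope n a s z x"]) (simp add: char_det_diff mult.commute)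
  moreover have "((\<lambda>x. char_det n a s x) has_real_derivative
      poly (pderiv (char_poly (mat n n (\<lambda>(i,j). a i j s)))) x) (at x)"
    using poly_DERIV[of "char_poly (mat n n (\<lambda>(i,j). a i j s))" x]
    by (simp add: poly_char_poly_eq_char_det)
  ultimately show ?thesis by (rule DERIV_unique)
qed

text \<open>Implicit differentiation of a continuous root curve \<open>\<rho>\<close> of \<open>det (x I - A(s)) = 0\<close>, using
  Caratheodory's characterisation of the derivative in \<open>s\<close> and the divided difference in \<open>x\<close>.\<close>

lemma root_curve_has_derivative:
  fixes a a' :: "nat \<Rightarrow> nat \<Rightarrow> real \<Rightarrow> real" and \<rho> :: "real \<Rightarrow> real"
  assumes S: "open S" "t \<in> S"
    and root: "\<And>s. s \<in> S \<Longrightarrow> char_det n a s (\<rho> s) = 0"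
    and cont: "isCont \<rho> t"
    and ader: "\<And>i j. i < n \<Longrightarrow> j < n \<Longrightarrow> (a i j has_real_derivative a' i j t) (at t)"
    and slope: "char_det_slope n a t (\<rho> t) (\<rho> t) \<noteq> 0"
  shows "(\<rho> has_real_derivative
    - char_det_dparam n a a' t (\<rho> t) / char_det_slope n a t (\<rho> t) (\<rho> t)) (at t)"
proof -
  define y where "y = \<rho> t"
  obtain H where H: "\<forall>z. char_det n a z y - char_det n a t y = H z * (z - t)" "isCont H t"
      "H t = char_det_dparam n a a' t y"
    using char_det_has_derivative_param[of n a a' t y, OF ader] unfolding CARAT_DERIV by blast
  define G where "G s = char_det_slope n a s (\<rho> s) y" for s
  have "isCont (a i j) t" if "i < n" "j < n" for i j using ader[OF that] by (rule DERIV_isCont)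
  then have "isCont G t" unfolding G_def using cont by (intro char_det_slope_isCont) auto
  moreover have "G t \<noteq> 0" using slope by (simp add: G_def y_def)
  ultimately have lim: "((\<lambda>s. - H s / G s) \<longlongrightarrow> - H t / G t) (at t)"
    using H(2) by (intro tendsto_intros) (auto simp: isCont_def)
  have "eventually (\<lambda>s. G s \<noteq> 0) (at t)"
    using \<open>isCont G t\<close> \<open>G t \<noteq> 0\<close> by (intro tendsto_imp_eventually_ne) (auto simp: isCont_def)
  moreover have "eventually (\<lambda>s. s \<in> S - {t}) (at t)" by (rule eventually_at_in_open[OF S])
  ultimately have "eventually (\<lambda>s. - H s / G s = (\<rho> s - \<rho> t) / (s - t)) (at t)"
  proof eventually_elim
    case (elim s)
    have "0 = char_det n a s (\<rho> s) - char_det n a t y" using elim root S(2) by (simp add: y_def)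
    also have "\<dots> = (\<rho> s - y) * G s + H s * (s - t)"
      using H(1)[rule_format, of s] char_det_diff[of n a s "\<rho> s" y] unfolding G_def by linarith
    finally show ?case using elim by (simp add: y_def field_simps)
  qed
  with lim have "((\<lambda>s. (\<rho> s - \<rho> t) / (s - t)) \<longlongrightarrow> - H t / G t) (at t)"
    by (rule Lim_transform_eventually)
  then show ?thesis using H(3) by (simp add: has_field_derivative_iff G_def y_def)
qed

lemma field_differentiable_prod:
  fixes f :: "'i \<Rightarrow> 'a::real_normed_field \<Rightarrow> 'a"
  shows "(\<And>i. i \<in> I \<Longrightarrow> f i field_differentiable (at z within S))
    \<Longrightarrow> (\<lambda>s. \<Prod>i\<in>I. f i s) field_differentiable (at z within S)"
proof (induction I rule: infinite_finite_induct)
  case (insert x A)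
  then show ?case by (auto intro!: field_differentiable_mult)
qed simp_all

lemma implicit_derivative_field_differentiable:
  fixes a a' :: "nat \<Rightarrow> nat \<Rightarrow> real \<Rightarrow> real" and \<rho> :: "real \<Rightarrow> real"
  assumes "\<rho> field_differentiable (at t)"
    and "\<And>i j. i < n \<Longrightarrow> j < n \<Longrightarrow> a i j field_differentiable (at t)"
    and "\<And>i j. i < n \<Longrightarrow> j < n \<Longrightarrow> a' i j field_differentiable (at t)"
    and "char_det_slope n a t (\<rho> t) (\<rho> t) \<noteq> 0"
  shows "(\<lambda>s. - char_det_dparam n a a' s (\<rho> s) / char_det_slope n a s (\<rho> s) (\<rho> s))
    field_differentiable (at t)"
  using assms(4) unfolding char_det_dparam_def char_det_slope_def char_entry_def
  by (intro derivative_intros field_differentiable_prod assms(1-3)) (auto dest!: permutes_less)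

text \<open>Pairing the eigen-equation at \<open>s\<close> (left) with that at \<open>t\<close> (right) bounds the difference
  of the eigenvalues by a continuous function of the entries vanishing at \<open>s = t\<close>.\<close>

lemma positive_eigenvalue_diff_bound:
  fixes a :: "nat \<Rightarrow> nat \<Rightarrow> real \<Rightarrow> real"
  assumes n: "n > 0"
    and v: "positive_eigenvector n (\<lambda>i j. a i j t) r v"
    and u: "positive_eigenvector n (\<lambda>i j. a j i s) q u"
  shows "\<bar>q - r\<bar> \<le> (\<Sum>k<n. \<bar>\<Sum>j<n. (a k j s - a k j t) * v j\<bar> / v k)"
proof -
  define w where "w k = (\<Sum>j<n. (a k j s - a k j t) * v j)" for k
  define W where "W = (\<Sum>k<n. \<bar>w k\<bar> / v k)"
  have v_pos: "\<forall>i<n. v i > 0" and v_eq: "\<forall>i<n. (\<Sum>j<n. a i j t * v j) = r * v i"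
    and u_pos: "\<forall>i<n. u i > 0"
    using u v by (auto simp: positive_eigenvector_def)
  define P where "P = (\<Sum>i<n. u i * v i)"
  have P_pos: "P > 0" unfolding P_def using n u_pos v_pos by (intro sum_pos) auto
  have "(q - r) * P = (\<Sum>i<n. u i * (\<Sum>j<n. a i j s * v j)) - (\<Sum>i<n. u i * (r * v i))"
    unfolding left_diff_distrib P_def left_eigenvector_pairing[OF u]
    by (simp add: sum_distrib_left mult_ac)
  also have "\<dots> = (\<Sum>i<n. u i * w i)"
    using v_eq by (simp add: w_def sum_subtractf right_diff_distrib left_diff_distrib flip: sum_distrib_left)
  finally have "\<bar>q - r\<bar> * P \<le> (\<Sum>i<n. \<bar>u i * w i\<bar>)"
    using P_pos by (metis abs_mult abs_of_pos sum_abs)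
  also have "\<dots> \<le> (\<Sum>i<n. u i * v i * W)"
  proof (rule sum_mono)
    fix i assume "i \<in> {..<n}"
    then have i: "i < n" by simp
    have "\<bar>w i\<bar> / v i \<le> W"
      unfolding W_def by (rule member_le_sum) (use i v_pos in auto)
    then have "\<bar>w i\<bar> \<le> v i * W" using v_pos i by (simp add: field_simps)
    moreover have "u i > 0" using u_pos i by simp
    ultimately show "\<bar>u i * w i\<bar> \<le> u i * v i * W"
      by (simp add: abs_mult mult.assoc mult_left_mono)
  qed
  also have "\<dots> = P * W" by (simp add: P_def sum_distrib_right)
  finally show ?thesis using P_pos by (simp add: mult.commute W_def w_def)
qed

lemma perron_root_isCont:
  fixes a :: "nat \<Rightarrow> nat \<Rightarrow> real \<Rightarrow> real" and \<rho> :: "real \<Rightarrow> real"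
  assumes S: "open S" "t \<in> S" and n: "n > 0"
    and cont: "\<And>i j. i < n \<Longrightarrow> j < n \<Longrightarrow> isCont (a i j) t"
    and v: "positive_eigenvector n (\<lambda>i j. a i j t) (\<rho> t) v"
    and u: "\<And>s. s \<in> S \<Longrightarrow> \<exists>u. positive_eigenvector n (\<lambda>i j. a j i s) (\<rho> s) u"
  shows "isCont \<rho> t"
proof -
  define W where "W s = (\<Sum>k<n. \<bar>\<Sum>j<n. (a k j s - a k j t) * v j\<bar> / v k)" for s
  have "\<forall>i<n. v i > 0" using v by (simp add: positive_eigenvector_def)
  then have "isCont W t" unfolding W_def by (intro continuous_intros cont) auto
  moreover have "W t = 0" by (simp add: W_def)
  ultimately have "(W \<longlongrightarrow> 0) (at t)" by (simp add: isCont_def)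
  moreover have "eventually (\<lambda>s. norm (\<rho> s - \<rho> t) \<le> W s) (at t)"
    using eventually_at_in_open'[OF S]
  proof eventually_elim
    case (elim s)
    then obtain u where "positive_eigenvector n (\<lambda>i j. a j i s) (\<rho> s) u" using u by blast
    then show ?case unfolding W_def real_norm_def by (rule positive_eigenvalue_diff_bound[where a = a, OF n v])
  qed
  ultimately have "((\<lambda>s. \<rho> s - \<rho> t) \<longlongrightarrow> 0) (at t)" by (rule Lim_null_comparison[rotated])
  then show ?thesis unfolding isCont_def by (rule LIM_zero_cancel)
qed

lemma perron_root_simple_root:
  assumes card: "CARD('n::finite) = n" and pos: "\<And>i j. i < n \<Longrightarrow> j < n \<Longrightarrow> a i j s > 0"
  defines "r \<equiv> largest_real_eig (mat n n (\<lambda>(i,j). a i j s))"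
  shows "char_det n a s r = 0" and "char_det_slope n a s r r > 0"
proof -
  have n: "n > 0" using card by auto
  obtain v u where "r > 0" and v: "positive_eigenvector n (\<lambda>i j. a i j s) r v"
    and u: "positive_eigenvector n (\<lambda>i j. a j i s) r u"
    unfolding r_def by (rule largest_real_eig_positive_matrix[OF card, of "\<lambda>i j. a i j s", OF pos])
  then show "char_det n a s r = 0" "char_det_slope n a s r r > 0"
    using positive_eigenvector_char_poly_root[OF n v] pderiv_char_poly_perron_root_pos[OF n pos u]
    by (simp_all add: poly_char_poly_eq_char_det char_det_slope_diag)
qed

theorem perron_root_differentiable:
  fixes a a' :: "nat \<Rightarrow> nat \<Rightarrow> real \<Rightarrow> real"
  assumes card: "CARD('n::finite) = n" and S: "open S"
    and pos: "\<And>s i j. s \<in> S \<Longrightarrow> i < n \<Longrightarrow> j < n \<Longrightarrow> a i j s > 0"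
    and ader: "\<And>s i j. s \<in> S \<Longrightarrow> i < n \<Longrightarrow> j < n \<Longrightarrow> (a i j has_real_derivative a' i j s) (at s)"
    and a'_diff: "\<And>s i j. s \<in> S \<Longrightarrow> i < n \<Longrightarrow> j < n \<Longrightarrow> a' i j field_differentiable (at s)"
  shows "\<exists>\<rho>'. \<forall>s\<in>S. ((\<lambda>s. largest_real_eig (mat n n (\<lambda>(i,j). a i j s))) has_real_derivative \<rho>' s) (at s)
    \<and> \<rho>' field_differentiable (at s)"
proof -
  define \<rho> where "\<rho> s = largest_real_eig (mat n n (\<lambda>(i,j). a i j s))" for s
  have n: "n > 0" using card by auto
  have perron: "\<exists>v u. positive_eigenvector n (\<lambda>i j. a i j s) (\<rho> s) v
      \<and> positive_eigenvector n (\<lambda>i j. a j i s) (\<rho> s) u" if s: "s \<in> S" for s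
  proof -
    obtain v u where "positive_eigenvector n (\<lambda>i j. a i j s) (largest_real_eig (mat n n (\<lambda>(i,j). a i j s))) v"
      and "positive_eigenvector n (\<lambda>i j. a j i s) (largest_real_eig (mat n n (\<lambda>(i,j). a i j s))) u"
      by (rule largest_real_eig_positive_matrix[OF card, of "\<lambda>i j. a i j s", OF pos[OF s]])
    then show ?thesis unfolding \<rho>_def by blast
  qed
  have root: "char_det n a s (\<rho> s) = 0" and slope_pos: "char_det_slope n a s (\<rho> s) (\<rho> s) > 0"
    if "s \<in> S" for s
    using perron_root_simple_root[where a = a, OF card pos[OF that]] unfolding \<rho>_def by simp_all
  have cont: "isCont \<rho> t" if t: "t \<in> S" for t
  proof -
    obtain v where v: "positive_eigenvector n (\<lambda>i j. a i j t) (\<rho> t) v" using perron[OF t] by blast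
    show ?thesis
    proof (rule perron_root_isCont[of S t n a \<rho> v, OF S t n _ v])
      show "isCont (a i j) t" if "i < n" "j < n" for i j using ader[OF t that] by (rule DERIV_isCont)
      show "\<exists>u. positive_eigenvector n (\<lambda>i j. a j i s) (\<rho> s) u" if "s \<in> S" for s
        using perron[OF that] by blast
    qed
  qed
  define \<rho>' where "\<rho>' s = - char_det_dparam n a a' s (\<rho> s) / char_det_slope n a s (\<rho> s) (\<rho> s)" for s
  have der: "(\<rho> has_real_derivative \<rho>' s) (at s)" if "s \<in> S" for s
    unfolding \<rho>'_def using slope_pos[OF that]
    by (intro root_curve_has_derivative[of S s n a \<rho> a', OF S that root cont[OF that] ader[OF that]]) auto
  moreover have "\<rho>' field_differentiable (at s)" if "s \<in> S" for s
    unfolding \<rho>'_def using der[OF that] ader[OF that] a'_diff[OF that] slope_pos[OF that]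
    by (intro implicit_derivative_field_differentiable) (auto simp: field_differentiable_def)
  ultimately show ?thesis unfolding \<rho>_def by blast
qed

section \<open>Lumpable positive matrices\<close>

definition block_index :: "'a set list \<Rightarrow> 'a \<Rightarrow> nat" where
  "block_index Gs x = (LEAST j. x \<in> Gs ! j)"

lemma block_index_eq:
  assumes "disjoint_family_on ((!) Gs) {..<length Gs}" "j < length Gs" "x \<in> Gs ! j"
  shows "block_index Gs x = j"
  unfolding block_index_def
proof (rule Least_equality)
  show "x \<in> Gs ! j" by (rule assms(3))
  show "j \<le> i" if "x \<in> Gs ! i" for i
  proof (rule ccontr)
    assume "\<not> j \<le> i"
    then have "i < length Gs" "i \<noteq> j" using assms(2) by auto
    with assms that show False unfolding disjoint_family_on_def by blast
  qed
qed

lemma block_index_mem: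
  assumes "disjoint_family_on ((!) Gs) {..<length Gs}" "k \<in> \<Union>(set Gs)"
  shows "block_index Gs k < length Gs" and "k \<in> Gs ! block_index Gs k"
proof -
  obtain j where "j < length Gs" "k \<in> Gs ! j" using assms(2) by (auto simp: in_set_conv_nth)
  then show "block_index Gs k < length Gs" "k \<in> Gs ! block_index Gs k"
    using block_index_eq[OF assms(1)] by simp_all
qed

lemma lumped_eigenvector:
  fixes w :: "'a \<Rightarrow> 'a \<Rightarrow> real" and Gs :: "'a set list"
  assumes disjoint: "disjoint_family_on ((!) Gs) {..<length Gs}"
    and finite: "\<And>G. G \<in> set Gs \<Longrightarrow> finite G"
    and lumpable: "\<And>i k j. i < length Gs \<Longrightarrow> k \<in> Gs ! i \<Longrightarrow> j < length Gs \<Longrightarrow>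
        (\<Sum>l\<in>Gs ! j. w k l) = \<tau> i j"
    and eigen: "\<And>i. i < length Gs \<Longrightarrow> (\<Sum>j<length Gs. \<tau> i j * x j) = r * x i"
    and k: "k \<in> \<Union>(set Gs)"
  shows "(\<Sum>l\<in>\<Union>(set Gs). w k l * x (block_index Gs l)) = r * x (block_index Gs k)"
proof -
  let ?n = "length Gs"
  have "set Gs = (!) Gs ` {..<?n}" by (auto simp: set_conv_nth)
  moreover have "finite (Gs ! j)" if "j < ?n" for j using finite nth_mem that by blast
  ultimately have "(\<Sum>l\<in>\<Union>(set Gs). w k l * x (block_index Gs l))
      = (\<Sum>j<?n. \<Sum>l\<in>Gs ! j. w k l * x (block_index Gs l))"
    using disjoint by (simp add: sum.UNION_disjoint disjoint_family_on_def)
  also have "\<dots> = (\<Sum>j<?n. (\<Sum>l\<in>Gs ! j. w k l) * x j)"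
    using block_index_eq[OF disjoint] by (intro sum.cong refl) (simp add: sum_distrib_right)
  also have "\<dots> = (\<Sum>j<?n. \<tau> (block_index Gs k) j * x j)"
    using lumpable block_index_mem[OF disjoint k] by simp
  also have "\<dots> = r * x (block_index Gs k)" using eigen block_index_mem[OF disjoint k] by simp
  finally show ?thesis .
qed

lemma lumped_perron_eigenvector:
  fixes w :: "'a \<Rightarrow> 'a \<Rightarrow> real" and Gs :: "'a set list" and rs :: "'a list"
  assumes card: "CARD('n::finite) = length Gs"
    and disjoint: "disjoint_family_on ((!) Gs) {..<length Gs}"
    and blocks: "\<And>G. G \<in> set Gs \<Longrightarrow> finite G \<and> G \<noteq> {}"
    and w_pos: "\<And>k l. w k l > 0"
    and lumpable: "\<And>i k j. i < length Gs \<Longrightarrow> k \<in> Gs ! i \<Longrightarrow> j < length Gs \<Longrightarrow>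
        (\<Sum>l\<in>Gs ! j. w k l) = (\<Sum>l\<in>Gs ! j. w (rs ! i) l)"
  defines "r \<equiv> largest_real_eig (mat (length Gs) (length Gs) (\<lambda>(i, j). \<Sum>l\<in>Gs ! j. w (rs ! i) l))"
  shows "r > 0 \<and> (\<exists>v. (\<forall>k\<in>\<Union>(set Gs). v k > 0)
    \<and> (\<forall>k\<in>\<Union>(set Gs). (\<Sum>l\<in>\<Union>(set Gs). w k l * v l) = r * v k))"
proof -
  let ?n = "length Gs"
  define \<tau> where "\<tau> i j = (\<Sum>l\<in>Gs ! j. w (rs ! i) l)" for i j
  have "\<tau> i j > 0" if "j < ?n" for i j
    unfolding \<tau>_def using blocks[of "Gs ! j"] that w_pos by (intro sum_pos) auto
  then obtain x u where "largest_real_eig (mat ?n ?n (\<lambda>(i, j). \<tau> i j)) > 0"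
    and "positive_eigenvector ?n \<tau> (largest_real_eig (mat ?n ?n (\<lambda>(i, j). \<tau> i j))) x"
    and "positive_eigenvector ?n (\<lambda>i j. \<tau> j i) (largest_real_eig (mat ?n ?n (\<lambda>(i, j). \<tau> i j))) u"
    by (rule largest_real_eig_positive_matrix[OF card])
  then have r_pos: "r > 0" and x: "positive_eigenvector ?n \<tau> r x"
    unfolding r_def \<tau>_def by simp_all
  have "x (block_index Gs k) > 0" if "k \<in> \<Union>(set Gs)" for k
    using x block_index_mem[OF disjoint that] by (simp add: positive_eigenvector_def)
  moreover have "(\<Sum>l\<in>\<Union>(set Gs). w k l * x (block_index Gs l)) = r * x (block_index Gs k)"
    if "k \<in> \<Union>(set Gs)" for k
    using x blocks lumpable that unfolding \<tau>_def positive_eigenvector_def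
    by (intro lumped_eigenvector[OF disjoint]) auto
  ultimately show ?thesis using r_pos by (intro conjI exI[of _ "\<lambda>k. x (block_index Gs k)"]) auto
qed

section \<open>Cyclic transfer sums\<close>

primrec walk_weight :: "'a set \<Rightarrow> ('a \<Rightarrow> 'a \<Rightarrow> real) \<Rightarrow> nat \<Rightarrow> 'a \<Rightarrow> 'a \<Rightarrow> real" where
  "walk_weight K w 0 a b = of_bool (a = b)"
| "walk_weight K w (Suc n) a b = (\<Sum>d\<in>K. walk_weight K w n a d * w d b)"

lemma sum_PiE_lessThan_Suc:
  "(\<Sum>c\<in>{..<Suc m} \<rightarrow>\<^sub>E K. F c) = (\<Sum>g\<in>{..<m} \<rightarrow>\<^sub>E K. \<Sum>y\<in>K. F (g(m := y)))"
proof -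
  have "(\<Sum>c\<in>{..<Suc m} \<rightarrow>\<^sub>E K. F c) = (\<Sum>(y, g)\<in>K \<times> ({..<m} \<rightarrow>\<^sub>E K). F (g(m := y)))"
    unfolding lessThan_Suc PiE_insert_eq
    by (subst sum.reindex[OF inj_combinator]) (simp_all add: case_prod_unfold)
  also have "\<dots> = (\<Sum>y\<in>K. \<Sum>g\<in>{..<m} \<rightarrow>\<^sub>E K. F (g(m := y)))"
    by (simp only: sum.cartesian_product)
  also have "\<dots> = (\<Sum>g\<in>{..<m} \<rightarrow>\<^sub>E K. \<Sum>y\<in>K. F (g(m := y)))"
    by (rule sum.swap)
  finally show ?thesis .
qed

lemma sum_walks_eq_walk_weight:
  assumes "finite K"
  shows "(\<Sum>c\<in>{..<Suc n} \<rightarrow>\<^sub>E K. (\<Prod>m<n. w (c m) (c (Suc m))) * f (c 0) (c n))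
     = (\<Sum>a\<in>K. \<Sum>b\<in>K. f a b * walk_weight K w n a b)"
proof (induction n arbitrary: f)
  case 0
  have "(\<Sum>b\<in>K. f a b * of_bool (a = b)) = (\<Sum>b\<in>K. if b = a then f a a else 0)" for a
    by (rule sum.cong) auto
  then have "(\<Sum>a\<in>K. \<Sum>b\<in>K. f a b * of_bool (a = b)) = (\<Sum>a\<in>K. f a a)"
    using assms by simp
  then show ?case by (simp add: sum_PiE_lessThan_Suc)
next
  case (Suc n)
  have "(\<Sum>c\<in>{..<Suc (Suc n)} \<rightarrow>\<^sub>E K. (\<Prod>m<Suc n. w (c m) (c (Suc m))) * f (c 0) (c (Suc n)))
      = (\<Sum>g\<in>{..<Suc n} \<rightarrow>\<^sub>E K. (\<Prod>m<n. w (g m) (g (Suc m))) * (\<Sum>y\<in>K. f (g 0) y * w (g n) y))"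
  proof (subst sum_PiE_lessThan_Suc, intro sum.cong refl)
    fix g
    have "(\<Prod>m<n. w ((g(Suc n := y)) m) ((g(Suc n := y)) (Suc m))) = (\<Prod>m<n. w (g m) (g (Suc m)))"
      for y by (rule prod.cong) auto
    then show "(\<Sum>y\<in>K. (\<Prod>m<Suc n. w ((g(Suc n := y)) m) ((g(Suc n := y)) (Suc m)))
        * f ((g(Suc n := y)) 0) ((g(Suc n := y)) (Suc n)))
      = (\<Prod>m<n. w (g m) (g (Suc m))) * (\<Sum>y\<in>K. f (g 0) y * w (g n) y)"
      by (simp add: sum_distrib_left mult_ac)
  qed
  also have "\<dots> = (\<Sum>a\<in>K. \<Sum>b\<in>K. (\<Sum>y\<in>K. f a y * w b y) * walk_weight K w n a b)"
    by (rule Suc.IH)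
  also have "\<dots> = (\<Sum>a\<in>K. \<Sum>y\<in>K. f a y * walk_weight K w (Suc n) a y)"
    by (rule sum.cong[OF refl]) (simp add: sum_distrib_left sum_distrib_right mult_ac, rule sum.swap)
  finally show ?case .
qed

lemma sum_cycles_eq_trace:
  assumes "finite K"
  shows "(\<Sum>c\<in>{..<Suc n} \<rightarrow>\<^sub>E K. \<Prod>m<Suc n. w (c m) (c (Suc m mod Suc n)))
     = (\<Sum>a\<in>K. walk_weight K w (Suc n) a a)"
proof -
  have "(\<Prod>m<n. w (c m) (c (Suc m mod Suc n))) = (\<Prod>m<n. w (c m) (c (Suc m)))" for c
    by (intro prod.cong) auto
  then have "(\<Prod>m<Suc n. w (c m) (c (Suc m mod Suc n))) = (\<Prod>m<n. w (c m) (c (Suc m))) * w (c n) (c 0)"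
    for c by simp
  then show ?thesis
    using sum_walks_eq_walk_weight[OF assms, where n = n and w = w and f = "\<lambda>a b. w b a"] by (simp add: mult.commute)
qed

lemma ln_limit_of_geometric_bounds:
  fixes Z :: "nat \<Rightarrow> real"
  assumes c: "c > 0" and C: "C > 0" and r: "r > 0"
    and lower: "\<And>n. c * r ^ n \<le> Z (Suc n)" and upper: "\<And>n. Z (Suc n) \<le> C * r ^ n"
  shows "(\<lambda>M. ln (Z M) / real M) \<longlonglongrightarrow> ln r"
proof -
  have bounds: "ln r + (ln c - ln r) / real M \<le> ln (Z M) / real M
      \<and> ln (Z M) / real M \<le> ln r + (ln C - ln r) / real M" if "M \<ge> 1" for M
  proof -
    obtain n where n: "M = Suc n" using \<open>M \<ge> 1\<close> by (cases M) auto
    have "0 < c * r ^ n" using c r by simp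
    then have "ln (c * r ^ n) \<le> ln (Z M)" "ln (Z M) \<le> ln (C * r ^ n)"
      using lower[of n] upper[of n] n by simp_all
    then have "ln c + n * ln r \<le> ln (Z M)" "ln (Z M) \<le> ln C + n * ln r"
      using c C r by (simp_all add: ln_mult ln_realpow)
    moreover have "ln r + (x - ln r) / real M = (x + n * ln r) / real M" for x
      using n by (simp add: field_simps)
    ultimately show ?thesis by (simp add: divide_right_mono)
  qed
  show ?thesis
  proof (rule tendsto_sandwich)
    show "eventually (\<lambda>M. ln r + (ln c - ln r) / real M \<le> ln (Z M) / real M) sequentially"
      "eventually (\<lambda>M. ln (Z M) / real M \<le> ln r + (ln C - ln r) / real M) sequentially"
      using bounds by (auto intro: eventually_sequentiallyI[of 1])
    show "(\<lambda>M. ln r + (ln c - ln r) / real M) \<longlonglongrightarrow> ln r"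
      "(\<lambda>M. ln r + (ln C - ln r) / real M) \<longlonglongrightarrow> ln r"
      using tendsto_add[OF tendsto_const lim_const_over_n] by simp_all
  qed
qed

lemma sum_cycles_pos:
  fixes w :: "'a \<Rightarrow> 'a \<Rightarrow> real"
  assumes "finite K" "K \<noteq> {}" "\<And>a b. a \<in> K \<Longrightarrow> b \<in> K \<Longrightarrow> w a b > 0"
  shows "(\<Sum>c\<in>{..<M} \<rightarrow>\<^sub>E K. \<Prod>m<M. w (c m) (c (Suc m mod M))) > 0"
proof (rule sum_pos)
  show "finite ({..<M} \<rightarrow>\<^sub>E K)" using assms(1) by (simp add: finite_PiE)
  show "{..<M} \<rightarrow>\<^sub>E K \<noteq> {}" using assms(2) by (simp add: PiE_eq_empty_iff)
  fix c assume c: "c \<in> {..<M} \<rightarrow>\<^sub>E K"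
  have "c m \<in> K" "c (Suc m mod M) \<in> K" if "m < M" for m
    using c that by (auto simp: PiE_iff)
  then show "(\<Prod>m<M. w (c m) (c (Suc m mod M))) > 0" using assms(3) by (intro prod_pos) auto
qed

context
  fixes K :: "'a set" and w :: "'a \<Rightarrow> 'a \<Rightarrow> real" and v :: "'a \<Rightarrow> real" and r :: real
  assumes K: "finite K" "K \<noteq> {}"
    and w_pos: "\<And>a b. a \<in> K \<Longrightarrow> b \<in> K \<Longrightarrow> w a b > 0"
    and v_pos: "\<And>a. a \<in> K \<Longrightarrow> v a > 0"
    and eigen: "\<And>a. a \<in> K \<Longrightarrow> (\<Sum>b\<in>K. w a b * v b) = r * v a"
begin

lemma walk_weight_nonneg: "a \<in> K \<Longrightarrow> b \<in> K \<Longrightarrow> walk_weight K w n a b \<ge> 0"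
  by (induction n arbitrary: b) (auto intro!: sum_nonneg mult_nonneg_nonneg less_imp_le[OF w_pos])

lemma walk_weight_eigen: "a \<in> K \<Longrightarrow> (\<Sum>b\<in>K. walk_weight K w n a b * v b) = r ^ n * v a"
proof (induction n)
  case 0
  have "(\<Sum>b\<in>K. walk_weight K w 0 a b * v b) = (\<Sum>b\<in>K. if b = a then v a else 0)"
    by (rule sum.cong) auto
  then show ?case using K 0 by simp
next
  case (Suc n)
  have "(\<Sum>b\<in>K. walk_weight K w (Suc n) a b * v b) = (\<Sum>d\<in>K. walk_weight K w n a d * (\<Sum>b\<in>K. w d b * v b))"
    by (simp add: sum_distrib_left sum_distrib_right mult_ac) (rule sum.swap)
  also have "\<dots> = (\<Sum>d\<in>K. walk_weight K w n a d * (r * v d))"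
    by (intro sum.cong refl) (simp add: eigen)
  also have "\<dots> = r * (\<Sum>d\<in>K. walk_weight K w n a d * v d)"
    by (simp add: sum_distrib_left mult_ac)
  finally show ?case using Suc by simp
qed

lemma positive_eigenvector_eigenvalue_pos: "r > 0"
proof -
  obtain a where a: "a \<in> K" using K by blast
  have "(\<Sum>b\<in>K. w a b * v b) > 0" using K a w_pos v_pos by (intro sum_pos) auto
  then show ?thesis using eigen[OF a] v_pos[OF a] by (simp add: zero_less_mult_iff)
qed

lemma walk_weight_diag_le: "a \<in> K \<Longrightarrow> walk_weight K w n a a \<le> r ^ n"
proof -
  assume a: "a \<in> K"
  have "walk_weight K w n a a * v a \<le> (\<Sum>b\<in>K. walk_weight K w n a b * v b)"
    by (rule member_le_sum)
      (use a K v_pos in \<open>auto intro!: mult_nonneg_nonneg walk_weight_nonneg simp: less_imp_le\<close>)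
  also have "\<dots> = r ^ n * v a" using walk_weight_eigen[OF a] .
  finally show ?thesis using v_pos[OF a] by simp
qed

text \<open>With \<open>w\<^sub>0 = min w\<close> and \<open>v\<^sub>0 \<le> v \<le> v\<^sub>1\<close>:
  \<open>W\<^sup>n\<^sup>+\<^sup>1(a,a) \<ge> w\<^sub>0 \<Sum>\<^sub>d W\<^sup>n(a,d) \<ge> (w\<^sub>0/v\<^sub>1) r\<^sup>n v(a) \<ge> (w\<^sub>0 v\<^sub>0/v\<^sub>1) r\<^sup>n\<close>.\<close>

lemma walk_weight_diag_ge: "\<exists>c>0. \<forall>a\<in>K. \<forall>n. walk_weight K w (Suc n) a a \<ge> c * r ^ n"
proof -
  define w0 where "w0 = Min ((\<lambda>(a,b). w a b) ` (K \<times> K))"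
  define v0 where "v0 = Min (v ` K)"
  define v1 where "v1 = Max (v ` K)"
  have w0: "w0 > 0" "\<And>a b. a \<in> K \<Longrightarrow> b \<in> K \<Longrightarrow> w0 \<le> w a b"
    unfolding w0_def using K w_pos by (auto intro!: Min_le)
  have v0: "v0 > 0" "\<And>a. a \<in> K \<Longrightarrow> v0 \<le> v a"
    unfolding v0_def using K v_pos by auto
  have v1: "\<And>a. a \<in> K \<Longrightarrow> v a \<le> v1"
    unfolding v1_def using K by auto
  then have "v1 > 0" using K v_pos by (meson all_not_in_conv less_le_trans)
  show ?thesis
  proof (intro exI[of _ "w0 * v0 / v1"] conjI ballI allI)
    show "w0 * v0 / v1 > 0" using w0 v0 \<open>v1 > 0\<close> by simp
    fix a n assume a: "a \<in> K"
    have "w0 * v0 / v1 * r ^ n \<le> w0 / v1 * (r ^ n * v a)"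
      using v0(2)[OF a] w0(1) \<open>v1 > 0\<close> positive_eigenvector_eigenvalue_pos by (simp add: field_simps)
    also have "\<dots> = w0 / v1 * (\<Sum>d\<in>K. walk_weight K w n a d * v d)" using walk_weight_eigen[OF a] by simp
    also have "\<dots> \<le> (\<Sum>d\<in>K. walk_weight K w n a d * w0)"
      unfolding sum_distrib_left
    proof (rule sum_mono)
      fix d assume d: "d \<in> K"
      have "walk_weight K w n a d * v d \<le> walk_weight K w n a d * v1"
        using walk_weight_nonneg[OF a d] v1[OF d] by (simp add: mult_left_mono)
      then show "w0 / v1 * (walk_weight K w n a d * v d) \<le> walk_weight K w n a d * w0"
        using w0(1) \<open>v1 > 0\<close> by (simp add: field_simps)
    qed
    also have "\<dots> \<le> (\<Sum>d\<in>K. walk_weight K w n a d * w d a)"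
      by (rule sum_mono) (use walk_weight_nonneg[OF a] w0(2)[OF _ a] in \<open>auto intro: mult_left_mono\<close>)
    also have "\<dots> = walk_weight K w (Suc n) a a" by simp
    finally show "w0 * v0 / v1 * r ^ n \<le> walk_weight K w (Suc n) a a" .
  qed
qed

lemma trace_walk_weight_bounds:
  obtains c C where "c > 0" "C > 0"
    and "\<And>n. c * r ^ n \<le> (\<Sum>a\<in>K. walk_weight K w (Suc n) a a)"
    and "\<And>n. (\<Sum>a\<in>K. walk_weight K w (Suc n) a a) \<le> C * r ^ n"
proof -
  obtain c where c: "c > 0" "\<forall>a\<in>K. \<forall>n. walk_weight K w (Suc n) a a \<ge> c * r ^ n"
    using walk_weight_diag_ge by blast
  obtain a0 where a0: "a0 \<in> K" using K by blast
  have "c * r ^ n \<le> (\<Sum>a\<in>K. walk_weight K w (Suc n) a a)" for n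
  proof -
    have "c * r ^ n \<le> walk_weight K w (Suc n) a0 a0" using c a0 by blast
    also have "\<dots> \<le> (\<Sum>a\<in>K. walk_weight K w (Suc n) a a)"
      by (rule member_le_sum) (use a0 K in \<open>auto intro!: walk_weight_nonneg simp del: walk_weight.simps\<close>)
    finally show ?thesis .
  qed
  moreover have "(\<Sum>a\<in>K. walk_weight K w (Suc n) a a) \<le> real (card K) * r * r ^ n" for n
  proof -
    have "(\<Sum>a\<in>K. walk_weight K w (Suc n) a a) \<le> (\<Sum>a\<in>K. r ^ Suc n)"
      by (rule sum_mono) (rule walk_weight_diag_le)
    then show ?thesis by (simp add: mult.assoc del: walk_weight.simps)
  qed
  moreover have "real (card K) * r > 0" using K positive_eigenvector_eigenvalue_pos by (simp add: card_gt_0_iff)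
  ultimately show thesis by (intro that[OF c(1)])
qed

lemma ln_sum_cycles_limit:
  "(\<lambda>M. ln (\<Sum>c\<in>{..<M} \<rightarrow>\<^sub>E K. \<Prod>m<M. w (c m) (c (Suc m mod M))) / real M) \<longlonglongrightarrow> ln r"
proof -
  obtain c C where "c > 0" "C > 0"
    and "\<And>n. c * r ^ n \<le> (\<Sum>a\<in>K. walk_weight K w (Suc n) a a)"
    and "\<And>n. (\<Sum>a\<in>K. walk_weight K w (Suc n) a a) \<le> C * r ^ n"
    using trace_walk_weight_bounds by blast
  then show ?thesis
    using positive_eigenvector_eigenvalue_pos
    by (intro ln_limit_of_geometric_bounds[where c = c and C = C]) (simp_all only: sum_cycles_eq_trace[OF K(1)])
qed

end

section \<open>Layer states and their symmetries\<close>

lemma sum_lessThan_4: "(\<Sum>i<(4::nat). f i) = f 0 + f 1 + f 2 + (f 3 :: 'a::comm_monoid_add)"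
  by (simp add: eval_nat_numeral add.assoc)

lemma prod_lessThan_4: "(\<Prod>i<(4::nat). f i) = f 0 * f 1 * f 2 * (f 3 :: 'a::comm_monoid_mult)"
  by (simp add: eval_nat_numeral mult.assoc)

lemma less_4_cases: "(i::nat) < 4 \<longleftrightarrow> i = 0 \<or> i = 1 \<or> i = 2 \<or> i = 3"
  by presburger

lemma less_3_cases: "(i::nat) < 3 \<longleftrightarrow> i = 0 \<or> i = 1 \<or> i = 2"
  by presburger

lemma ex_less_4: "(\<exists>r<(4::nat). P r) \<longleftrightarrow> P 0 \<or> P 1 \<or> P 2 \<or> P 3"
  unfolding less_4_cases by blast

lemma atLeastAtMost_1_16_cases:
  "(k::nat) \<in> {1..16} \<longleftrightarrow> k = 1 \<or> k = 2 \<or> k = 3 \<or> k = 4 \<or> k = 5 \<or> k = 6 \<or> k = 7 \<or> k = 8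
    \<or> k = 9 \<or> k = 10 \<or> k = 11 \<or> k = 12 \<or> k = 13 \<or> k = 14 \<or> k = 15 \<or> k = 16"
  unfolding atLeastAtMost_iff by presburger

lemma cube_energy_expand: "cube_energy J1 J2 J3 a b = - (
      J1 * (a 0 * a 1 + b 0 * b 1 + a 0 * b 0 + a 1 * a 2 + b 1 * b 2 + a 1 * b 1
          + a 2 * a 3 + b 2 * b 3 + a 2 * b 2 + a 3 * a 0 + b 3 * b 0 + a 3 * b 3)
    + J2 * (3/4 * a 0 * a 2 + 3/4 * a 1 * a 3 + 3/4 * b 0 * b 2 + 3/4 * b 1 * b 3
          + a 0 * b 1 + a 0 * b 3 + a 1 * b 2 + a 1 * b 0 + a 2 * b 3 + a 2 * b 1 + a 3 * b 0 + a 3 * b 2)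
    + J3 * (3/4 * (a 0 * a 1 * a 2 * a 3) + 3/4 * (b 0 * b 1 * b 2 * b 3)
          + a 0 * a 1 * b 0 * b 1 + a 1 * a 2 * b 1 * b 2 + a 2 * a 3 * b 2 * b 3 + a 3 * a 0 * b 3 * b 0))"
proof -
  have mod_4: "(0 + 1) mod 4 = (1::nat)" "(1 + 1) mod 4 = (2::nat)" "(2 + 1) mod 4 = (3::nat)"
    "(3 + 1) mod 4 = (0::nat)" "(0 + 2) mod 4 = (2::nat)" "(1 + 2) mod 4 = (3::nat)"
    "(2 + 2) mod 4 = (0::nat)" "(3 + 2) mod 4 = (1::nat)" "(0 + 3) mod 4 = (3::nat)"
    "(1 + 3) mod 4 = (0::nat)" "(2 + 3) mod 4 = (1::nat)" "(3 + 3) mod 4 = (2::nat)"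
    by simp_all
  show ?thesis
    unfolding cube_energy_def sum_lessThan_4 prod_lessThan_4 mod_4 by (simp add: algebra_simps)
qed

lemma cube_energy_rotate:
  assumes "a 4 = a 0" "b 4 = b 0"
  shows "cube_energy J1 J2 J3 (\<lambda>i. a (i + 1)) (\<lambda>i. b (i + 1)) = cube_energy J1 J2 J3 a b"
proof -
  have num: "0 + 1 = (1::nat)" "1 + 1 = (2::nat)" "2 + 1 = (3::nat)" "3 + 1 = (4::nat)" by simp_all
  show ?thesis unfolding cube_energy_expand by (simp only: num assms) (simp add: algebra_simps)
qed

lemma cube_energy_flip: "cube_energy J1 J2 J3 (\<lambda>i. - a i) (\<lambda>i. - b i) = cube_energy J1 J2 J3 a b"
  by (simp add: cube_energy_expand)

definition state_code :: "(nat \<Rightarrow> real) \<Rightarrow> nat" where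
  "state_code a = (\<Sum>i<4. if a i = -1 then 2 ^ i else 0) + 1"

lemma state_spin_mod_4: "state_spin k (i mod 4) = state_spin k i"
  by (simp add: state_spin_def)

lemma state_spin_pm1: "state_spin k i \<in> {-1, 1}"
  by (simp add: state_spin_def)

lemma state_code_state_spin: "k \<in> {1..16} \<Longrightarrow> state_code (state_spin k) = k"
proof -
  assume "k \<in> {1..16}"
  then show ?thesis unfolding atLeastAtMost_1_16_cases by (elim disjE) (simp_all add: state_code_def sum_lessThan_4 state_spin_def)
qed

lemma state_code_spins:
  assumes "\<forall>i<4. a i \<in> {-1, 1}"
  shows "state_code a \<in> {1..16}" and "state_spin (state_code a) i = a (i mod 4)"
proof -
  have "a 0 \<in> {-1, 1}" "a 1 \<in> {-1, 1}" "a 2 \<in> {-1, 1}" "a 3 \<in> {-1, 1}" using assms by auto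
  moreover have "i mod 4 < 4" by simp
  ultimately show "state_code a \<in> {1..16}" "state_spin (state_code a) i = a (i mod 4)"
    unfolding less_4_cases
    by (auto simp: state_code_def sum_lessThan_4 state_spin_def)
qed

definition rotate_state :: "nat \<Rightarrow> nat" where
  "rotate_state k = state_code (\<lambda>i. state_spin k (i + 1))"

definition flip_state :: "nat \<Rightarrow> nat" where
  "flip_state k = state_code (\<lambda>i. - state_spin k i)"

lemma state_spin_rotate_state: "state_spin (rotate_state k) = (\<lambda>i. state_spin k (i + 1))"
proof
  fix i
  have "state_spin (rotate_state k) i = state_spin k (i mod 4 + 1)"
    unfolding rotate_state_def using state_spin_pm1 by (subst state_code_spins(2)) auto
  also have "\<dots> = state_spin k (i + 1)" by (metis mod_add_left_eq state_spin_mod_4)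
  finally show "state_spin (rotate_state k) i = state_spin k (i + 1)" .
qed

lemma state_spin_flip_state: "state_spin (flip_state k) = (\<lambda>i. - state_spin k i)"
proof
  fix i
  have "state_spin (flip_state k) i = - state_spin k (i mod 4)"
    unfolding flip_state_def using state_spin_pm1 by (subst state_code_spins(2)) auto
  then show "state_spin (flip_state k) i = - state_spin k i" by (simp add: state_spin_mod_4)
qed

lemma theta_rotate_state:
  "theta kB J1 J2 J3 T (rotate_state k) (rotate_state l) = theta kB J1 J2 J3 T k l"
proof -
  have spin_4: "state_spin k 4 = state_spin k 0" for k using state_spin_mod_4[of k 4] by simp
  have "cube_energy J1 J2 J3 (\<lambda>i. state_spin k (i + 1)) (\<lambda>i. state_spin l (i + 1))
      = cube_energy J1 J2 J3 (state_spin k) (state_spin l)"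
    by (rule cube_energy_rotate[OF spin_4 spin_4])
  then show ?thesis unfolding theta_def state_spin_rotate_state by simp
qed

lemma theta_flip_state: "theta kB J1 J2 J3 T (flip_state k) (flip_state l) = theta kB J1 J2 J3 T k l"
  unfolding theta_def state_spin_flip_state by (simp add: cube_energy_flip)

lemma rotate_state_simps:
  "rotate_state 1 = 1" "rotate_state 2 = 9" "rotate_state 3 = 2" "rotate_state 4 = 10"
  "rotate_state 5 = 3" "rotate_state 6 = 11" "rotate_state 7 = 4" "rotate_state 8 = 12"
  "rotate_state 9 = 5" "rotate_state 10 = 13" "rotate_state 11 = 6" "rotate_state 12 = 14"
  "rotate_state 13 = 7" "rotate_state 14 = 15" "rotate_state 15 = 8" "rotate_state 16 = 16"
  by (simp_all add: rotate_state_def state_code_def sum_lessThan_4 state_spin_def)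

lemma flip_state_simps:
  "flip_state 1 = 16" "flip_state 2 = 15" "flip_state 3 = 14" "flip_state 4 = 13"
  "flip_state 5 = 12" "flip_state 6 = 11" "flip_state 7 = 10" "flip_state 8 = 9"
  "flip_state 9 = 8" "flip_state 10 = 7" "flip_state 11 = 6" "flip_state 12 = 5"
  "flip_state 13 = 4" "flip_state 14 = 3" "flip_state 15 = 2" "flip_state 16 = 1"
  by (simp_all add: flip_state_def state_code_def sum_lessThan_4 state_spin_def)

lemma sum_row_invariant:
  fixes w :: "'a \<Rightarrow> 'a \<Rightarrow> 'b::comm_monoid_add"
  assumes sym: "\<And>k l. w (f k) (f l) = w k l" and G: "finite G" "f ` G = G"
  shows "(\<Sum>l\<in>G. w (f k) l) = (\<Sum>l\<in>G. w k l)"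
proof -
  have "inj_on f G" using G by (simp add: finite_surj_inj)
  then have "(\<Sum>l\<in>G. w (f k) l) = (\<Sum>l\<in>G. w (f k) (f l))"
    using sum.reindex[of f G "w (f k)"] G(2) by simp
  then show ?thesis by (simp add: sym)
qed

definition rotation_orbit :: "nat \<Rightarrow> nat set" where
  "rotation_orbit k =
     {k, rotate_state k, rotate_state (rotate_state k), rotate_state (rotate_state (rotate_state k))}"

lemma sum_theta_rotation_orbit:
  assumes "finite G" "rotate_state ` G = G" "k \<in> rotation_orbit r"
  shows "(\<Sum>l\<in>G. theta kB J1 J2 J3 T k l) = (\<Sum>l\<in>G. theta kB J1 J2 J3 T r l)"
  using assms(3) sum_row_invariant[where w = "theta kB J1 J2 J3 T", OF theta_rotate_state assms(1,2)]
  by (auto simp: rotation_orbit_def)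

lemma sum_theta_symmetry_orbit:
  assumes "finite G" "rotate_state ` G = G" "flip_state ` G = G"
    and "k \<in> rotation_orbit r \<union> rotation_orbit (flip_state r)"
  shows "(\<Sum>l\<in>G. theta kB J1 J2 J3 T k l) = (\<Sum>l\<in>G. theta kB J1 J2 J3 T r l)"
  using assms(4) sum_theta_rotation_orbit[OF assms(1,2)]
    sum_row_invariant[where w = "theta kB J1 J2 J3 T", OF theta_flip_state assms(1,3)]
  by auto

text \<open>In these computations \<open>One_nat_def\<close> must not be a simp rule: it would turn the numeral \<open>1\<close>
  in the definitions of the groups into \<open>Suc 0\<close>, which the tables above do not match.\<close>

lemma groups_tau_orbits:
  assumes "j < 4"
  shows "groups_tau ! j = rotation_orbit (rows_tau ! j) \<union> rotation_orbit (flip_state (rows_tau ! j))"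
    and "rotate_state ` (groups_tau ! j) = groups_tau ! j" and "flip_state ` (groups_tau ! j) = groups_tau ! j"
proof -
  have j: "j = 0 \<or> j = 1 \<or> j = 2 \<or> j = 3" using assms by presburger
  note simps = groups_tau_def rows_tau_def rotation_orbit_def rotate_state_simps flip_state_simps
    insert_commute
  show "groups_tau ! j = rotation_orbit (rows_tau ! j) \<union> rotation_orbit (flip_state (rows_tau ! j))"
    using j by (elim disjE) (simp_all add: simps del: One_nat_def)
  show "rotate_state ` (groups_tau ! j) = groups_tau ! j" using j by (elim disjE) (simp_all add: simps del: One_nat_def)
  show "flip_state ` (groups_tau ! j) = groups_tau ! j" using j by (elim disjE) (simp_all add: simps del: One_nat_def)
qed

lemma groups_tau'_orbits:
  assumes "j < 3"
  shows "groups_tau' ! j = rotation_orbit (rows_tau' ! j)"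
    and "rotate_state ` (groups_tau' ! j) = groups_tau' ! j"
proof -
  have j: "j = 0 \<or> j = 1 \<or> j = 2" using assms by presburger
  note simps = groups_tau'_def rows_tau'_def rotation_orbit_def rotate_state_simps insert_commute
  show "groups_tau' ! j = rotation_orbit (rows_tau' ! j)" using j by (elim disjE) (simp_all add: simps del: One_nat_def)
  show "rotate_state ` (groups_tau' ! j) = groups_tau' ! j" using j by (elim disjE) (simp_all add: simps del: One_nat_def)
qed

section \<open>Partition functions as cyclic transfer sums\<close>

definition config_of_states :: "nat \<Rightarrow> (nat \<Rightarrow> nat) \<Rightarrow> nat \<times> nat \<Rightarrow> real" where
  "config_of_states M c = (\<lambda>(i, m). if i < 4 \<and> m < M then state_spin (c m) i else undefined)"

lemma state_code_cong: "(\<And>i. i < 4 \<Longrightarrow> a i = b i) \<Longrightarrow> state_code a = state_code b"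
  unfolding state_code_def by (intro arg_cong2[where f = "(+)"] sum.cong) auto

definition states_of_config :: "nat \<Rightarrow> (nat \<times> nat \<Rightarrow> real) \<Rightarrow> nat \<Rightarrow> nat" where
  "states_of_config M \<sigma> = (\<lambda>m. if m < M then state_code (\<lambda>i. \<sigma> (i, m)) else undefined)"

lemma config_of_states_in_configs: "config_of_states M c \<in> configs M"
  unfolding configs_def
proof (rule PiE_I)
  show "config_of_states M c p \<in> {-1, 1}" if "p \<in> {..<4} \<times> {..<M}" for p
  proof -
    obtain i m where "p = (i, m)" by (cases p)
    with that show ?thesis using state_spin_pm1[of "c m" i] by (simp add: config_of_states_def)
  qed
  show "config_of_states M c p = undefined" if "p \<notin> {..<4} \<times> {..<M}" for p
    using that by (cases p) (auto simp: config_of_states_def)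
qed

lemma config_of_states_of_config:
  assumes "\<sigma> \<in> configs M"
  shows "config_of_states M (states_of_config M \<sigma>) = \<sigma>"
proof
  fix p :: "nat \<times> nat"
  obtain i m where p: "p = (i, m)" by (cases p)
  have \<sigma>: "\<sigma> \<in> ({..<4} \<times> {..<M}) \<rightarrow>\<^sub>E {-1, 1}" using assms by (simp add: configs_def)
  show "config_of_states M (states_of_config M \<sigma>) p = \<sigma> p"
  proof (cases "i < 4 \<and> m < M")
    case True
    then have "\<forall>i<4. \<sigma> (i, m) \<in> {-1, 1}" using \<sigma> by (auto simp: PiE_iff)
    then show ?thesis
      using True by (simp add: config_of_states_def states_of_config_def p state_code_spins(2))
  next
    case False
    then show ?thesis using PiE_arb[OF \<sigma>, of p] by (auto simp: config_of_states_def p)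
  qed
qed

lemma states_of_config_of_states:
  assumes "K \<subseteq> {1..16}" "c \<in> {..<M} \<rightarrow>\<^sub>E K"
  shows "states_of_config M (config_of_states M c) = c"
proof
  fix m
  have "state_code (\<lambda>i. config_of_states M c (i, m)) = state_code (state_spin (c m))" if "m < M"
    using that by (intro state_code_cong) (simp add: config_of_states_def)
  also have "\<dots> = c m" if "m < M" using assms that by (intro state_code_state_spin) auto
  finally show "states_of_config M (config_of_states M c) m = c m"
    using PiE_arb[OF assms(2), of m] by (simp add: states_of_config_def)
qed

lemma sum_configs_reindex:
  assumes K: "K \<subseteq> {1..16}"
  shows "(\<Sum>\<sigma>\<in>{\<sigma>\<in>configs M. \<forall>m<M. state_code (\<lambda>i. \<sigma> (i, m)) \<in> K}. F \<sigma>)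
       = (\<Sum>c\<in>{..<M} \<rightarrow>\<^sub>E K. F (config_of_states M c))"
proof (rule sum.reindex_bij_witness[of _ "config_of_states M" "states_of_config M"])
  fix \<sigma> assume "\<sigma> \<in> {\<sigma>\<in>configs M. \<forall>m<M. state_code (\<lambda>i. \<sigma> (i, m)) \<in> K}"
  then have \<sigma>: "\<sigma> \<in> configs M" and codes: "\<forall>m<M. state_code (\<lambda>i. \<sigma> (i, m)) \<in> K" by auto
  show "config_of_states M (states_of_config M \<sigma>) = \<sigma>" by (rule config_of_states_of_config[OF \<sigma>])
  then show "F (config_of_states M (states_of_config M \<sigma>)) = F \<sigma>" by simp
  show "states_of_config M \<sigma> \<in> {..<M} \<rightarrow>\<^sub>E K"
    using codes by (auto simp: states_of_config_def PiE_iff extensional_def split: if_split_asm)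
next
  fix c assume c: "c \<in> {..<M} \<rightarrow>\<^sub>E K"
  then show "states_of_config M (config_of_states M c) = c"
    by (rule states_of_config_of_states[OF K])
  then have "state_code (\<lambda>i. config_of_states M c (i, m)) \<in> K" if "m < M" for m
    using c that by (metis PiE_mem lessThan_iff states_of_config_def)
  then show "config_of_states M c \<in> {\<sigma>\<in>configs M. \<forall>m<M. state_code (\<lambda>i. \<sigma> (i, m)) \<in> K}"
    by (simp add: config_of_states_in_configs)
qed

lemma boltzmann_weight_config_of_states:
  "exp (- hamiltonian J1 J2 J3 M (config_of_states M c) / (kB * T))
     = (\<Prod>m<M. theta kB J1 J2 J3 T (c m) (c (Suc m mod M)))"
proof -
  have "layer M (config_of_states M c) m = state_spin (c (m mod M))" if "M > 0" for m
    using that by (auto simp: layer_def config_of_states_def state_spin_mod_4)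
  then have "hamiltonian J1 J2 J3 M (config_of_states M c)
      = (\<Sum>m<M. cube_energy J1 J2 J3 (state_spin (c m)) (state_spin (c (Suc m mod M))))"
    unfolding hamiltonian_def by (intro sum.cong) auto
  then show ?thesis by (simp add: theta_def exp_sum sum_divide_distrib flip: sum_negf)
qed

lemma union_groups_tau: "\<Union>(set groups_tau) = {1..16}"
  unfolding atLeastAtMost_1_16_cases set_eq_iff by (simp add: groups_tau_def) blast

lemma union_groups_tau': "\<Union>(set groups_tau') = {1, 2, 3, 5, 6, 9, 11}"
  by (auto simp: groups_tau'_def)

lemma configs_layer_states: "configs M = {\<sigma>\<in>configs M. \<forall>m<M. state_code (\<lambda>i. \<sigma> (i, m)) \<in> {1..16}}"
proof -
  have "state_code (\<lambda>i. \<sigma> (i, m)) \<in> {1..16}" if "\<sigma> \<in> configs M" "m < M" for \<sigma> m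
    using that by (intro state_code_spins(1)) (auto simp: configs_def PiE_iff)
  then show ?thesis by blast
qed

lemma nonperc_layer_iff:
  assumes "\<forall>i<4. a i \<in> {-1, 1}"
  shows "\<not> (\<exists>r<4. a r = -1 \<and> a ((r + 1) mod 4) = -1) \<longleftrightarrow> state_code a \<in> \<Union>(set groups_tau')"
proof -
  have "a 0 \<in> {-1, 1}" "a 1 \<in> {-1, 1}" "a 2 \<in> {-1, 1}" "a 3 \<in> {-1, 1}" using assms by auto
  moreover have mod_4: "(0 + 1) mod 4 = (1::nat)" "(1 + 1) mod 4 = (2::nat)" "(2 + 1) mod 4 = (3::nat)"
    "(3 + 1) mod 4 = (0::nat)" by simp_all
  have "(\<exists>r<4. a r = -1 \<and> a ((r + 1) mod 4) = -1) \<longleftrightarrow>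
      (a 0 = -1 \<and> a 1 = -1) \<or> (a 1 = -1 \<and> a 2 = -1) \<or> (a 2 = -1 \<and> a 3 = -1) \<or> (a 3 = -1 \<and> a 0 = -1)"
    unfolding ex_less_4 mod_4 ..
  ultimately show ?thesis
    unfolding union_groups_tau' by (auto simp: state_code_def sum_lessThan_4)
qed

lemma nonperc_configs_layer_states:
  "nonperc_configs M = {\<sigma>\<in>configs M. \<forall>m<M. state_code (\<lambda>i. \<sigma> (i, m)) \<in> \<Union>(set groups_tau')}"
proof -
  have layer: "\<not> (\<exists>r<4. \<sigma> (r, m) = -1 \<and> \<sigma> ((r + 1) mod 4, m) = -1)
      \<longleftrightarrow> state_code (\<lambda>i. \<sigma> (i, m)) \<in> \<Union>(set groups_tau')" if "\<sigma> \<in> configs M" "m < M" for \<sigma> m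
    using that by (intro nonperc_layer_iff) (auto simp: configs_def PiE_iff)
  show ?thesis unfolding nonperc_configs_def
  proof (intro Collect_cong conj_cong refl)
    fix \<sigma> assume \<sigma>: "\<sigma> \<in> configs M"
    define percolates where
      "percolates m \<longleftrightarrow> (\<exists>r<4. \<sigma> (r, m) = -1 \<and> \<sigma> ((r + 1) mod 4, m) = -1)" for m
    have "\<not> percolates m \<longleftrightarrow> state_code (\<lambda>i. \<sigma> (i, m)) \<in> \<Union>(set groups_tau')" if "m < M" for m
      unfolding percolates_def by (rule layer[OF \<sigma> that])
    then have "\<not> (\<exists>m<M. percolates m) \<longleftrightarrow> (\<forall>m<M. state_code (\<lambda>i. \<sigma> (i, m)) \<in> \<Union>(set groups_tau'))"
      by auto
    then show "\<not> (\<exists>m<M. \<exists>r<4. \<sigma> (r, m) = -1 \<and> \<sigma> ((r + 1) mod 4, m) = -1)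
        \<longleftrightarrow> (\<forall>m<M. state_code (\<lambda>i. \<sigma> (i, m)) \<in> \<Union>(set groups_tau'))"
      by (simp only: percolates_def)
  qed
qed

lemma partition_fn_eq_sum_cycles:
  "partition_fn kB J1 J2 J3 M T
     = (\<Sum>c\<in>{..<M} \<rightarrow>\<^sub>E \<Union>(set groups_tau). \<Prod>m<M. theta kB J1 J2 J3 T (c m) (c (Suc m mod M)))"
  unfolding partition_fn_def union_groups_tau
  by (subst configs_layer_states)
    (simp only: sum_configs_reindex[OF order_refl] boltzmann_weight_config_of_states)

lemma partition_fn'_eq_sum_cycles:
  "partition_fn' kB J1 J2 J3 M T
     = (\<Sum>c\<in>{..<M} \<rightarrow>\<^sub>E \<Union>(set groups_tau'). \<Prod>m<M. theta kB J1 J2 J3 T (c m) (c (Suc m mod M)))"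
proof -
  have "\<Union>(set groups_tau') \<subseteq> {1..16}" by (auto simp: union_groups_tau')
  then show ?thesis
    unfolding partition_fn'_def nonperc_configs_layer_states
    by (simp only: sum_configs_reindex boltzmann_weight_config_of_states)
qed

section \<open>The lumped transfer matrices \<open>\<tau>\<close> and \<open>\<tau>'\<close>\<close>

lemma theta_pos: "theta kB J1 J2 J3 T k l > 0"
  by (simp add: theta_def)

lemma length_groups_tau: "length groups_tau = 4"
  by (simp add: groups_tau_def)

lemma length_groups_tau': "length groups_tau' = 3"
  by (simp add: groups_tau'_def)

lemma groups_tau_blocks: "\<forall>G\<in>set groups_tau. finite G \<and> G \<noteq> {}"
  by (simp add: groups_tau_def)

lemma groups_tau'_blocks: "\<forall>G\<in>set groups_tau'. finite G \<and> G \<noteq> {}"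
  by (simp add: groups_tau'_def)

lemma lambda_max_lumped_eigenvector:
  "lambda_max kB J1 J2 J3 T > 0 \<and> (\<exists>v. (\<forall>k\<in>\<Union>(set groups_tau). v k > 0)
    \<and> (\<forall>k\<in>\<Union>(set groups_tau).
         (\<Sum>l\<in>\<Union>(set groups_tau). theta kB J1 J2 J3 T k l * v l) = lambda_max kB J1 J2 J3 T * v k))"
  unfolding lambda_max_def tau_mat_def length_groups_tau[symmetric]
proof (rule lumped_perron_eigenvector[where 'n = 4 and w = "theta kB J1 J2 J3 T" and Gs = groups_tau
      and rs = rows_tau])
  show "CARD(4) = length groups_tau" by (simp add: length_groups_tau)
  show "disjoint_family_on ((!) groups_tau) {..<length groups_tau}"
    unfolding disjoint_family_on_def length_groups_tau
  proof (intro ballI impI)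
    fix m n :: nat assume "m \<in> {..<4}" "n \<in> {..<4}" "m \<noteq> n"
    then show "groups_tau ! m \<inter> groups_tau ! n = {}"
      unfolding lessThan_iff less_4_cases by (auto simp: groups_tau_def)
  qed
  show "finite G \<and> G \<noteq> {}" if "G \<in> set groups_tau" for G
    using that groups_tau_blocks by blast
  show "(\<Sum>l\<in>groups_tau ! j. theta kB J1 J2 J3 T k l) = (\<Sum>l\<in>groups_tau ! j. theta kB J1 J2 J3 T (rows_tau ! i) l)"
    if i: "i < length groups_tau" and k: "k \<in> groups_tau ! i" and j: "j < length groups_tau" for i k j
  proof (rule sum_theta_symmetry_orbit)
    have "i < 4" "j < 4" using i j by (simp_all only: length_groups_tau)
    then show "rotate_state ` (groups_tau ! j) = groups_tau ! j" "flip_state ` (groups_tau ! j) = groups_tau ! j"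
      and "k \<in> rotation_orbit (rows_tau ! i) \<union> rotation_orbit (flip_state (rows_tau ! i))"
      using k groups_tau_orbits by simp_all
    show "finite (groups_tau ! j)" using nth_mem[OF j] groups_tau_blocks by blast
  qed
qed (rule theta_pos)

lemma mu_max_lumped_eigenvector:
  "mu_max kB J1 J2 J3 T > 0 \<and> (\<exists>v. (\<forall>k\<in>\<Union>(set groups_tau'). v k > 0)
    \<and> (\<forall>k\<in>\<Union>(set groups_tau').
         (\<Sum>l\<in>\<Union>(set groups_tau'). theta kB J1 J2 J3 T k l * v l) = mu_max kB J1 J2 J3 T * v k))"
  unfolding mu_max_def tau'_mat_def length_groups_tau'[symmetric]
proof (rule lumped_perron_eigenvector[where 'n = 3 and w = "theta kB J1 J2 J3 T" and Gs = groups_tau'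
      and rs = rows_tau'])
  show "CARD(3) = length groups_tau'" by (simp add: length_groups_tau')
  show "disjoint_family_on ((!) groups_tau') {..<length groups_tau'}"
    unfolding disjoint_family_on_def length_groups_tau'
  proof (intro ballI impI)
    fix m n :: nat assume "m \<in> {..<3}" "n \<in> {..<3}" "m \<noteq> n"
    then show "groups_tau' ! m \<inter> groups_tau' ! n = {}"
      unfolding lessThan_iff less_3_cases by (auto simp: groups_tau'_def)
  qed
  show "finite G \<and> G \<noteq> {}" if "G \<in> set groups_tau'" for G
    using that groups_tau'_blocks by blast
  show "(\<Sum>l\<in>groups_tau' ! j. theta kB J1 J2 J3 T k l) = (\<Sum>l\<in>groups_tau' ! j. theta kB J1 J2 J3 T (rows_tau' ! i) l)"
    if i: "i < length groups_tau'" and k: "k \<in> groups_tau' ! i" and j: "j < length groups_tau'" for i k j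
  proof (rule sum_theta_rotation_orbit)
    have "i < 3" "j < 3" using i j by (simp_all only: length_groups_tau')
    then show "rotate_state ` (groups_tau' ! j) = groups_tau' ! j"
      and "k \<in> rotation_orbit (rows_tau' ! i)"
      using k groups_tau'_orbits by simp_all
    show "finite (groups_tau' ! j)" using nth_mem[OF j] groups_tau'_blocks by blast
  qed
qed (rule theta_pos)

section \<open>Thermodynamic limit\<close>

lemma lambda_max_pos: "lambda_max kB J1 J2 J3 T > 0"
  using lambda_max_lumped_eigenvector by blast

lemma mu_max_pos: "mu_max kB J1 J2 J3 T > 0"
  using mu_max_lumped_eigenvector by blast

lemma ln_partition_fn_limit:
  "(\<lambda>M. ln (partition_fn kB J1 J2 J3 M T) / real M) \<longlonglongrightarrow> ln (lambda_max kB J1 J2 J3 T)"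
proof -
  obtain v where v_pos: "\<forall>k\<in>\<Union>(set groups_tau). v k > 0"
    and eigen: "\<forall>k\<in>\<Union>(set groups_tau).
      (\<Sum>l\<in>\<Union>(set groups_tau). theta kB J1 J2 J3 T k l * v l) = lambda_max kB J1 J2 J3 T * v k"
    using lambda_max_lumped_eigenvector by blast
  have "finite (\<Union>(set groups_tau))" "\<Union>(set groups_tau) \<noteq> {}" by (simp_all add: union_groups_tau)
  then show ?thesis
    unfolding partition_fn_eq_sum_cycles
    by (rule ln_sum_cycles_limit[where w = "theta kB J1 J2 J3 T" and v = v])
      (simp_all add: theta_pos v_pos eigen)
qed

lemma ln_partition_fn'_limit:
  "(\<lambda>M. ln (partition_fn' kB J1 J2 J3 M T) / real M) \<longlonglongrightarrow> ln (mu_max kB J1 J2 J3 T)"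
proof -
  obtain v where v_pos: "\<forall>k\<in>\<Union>(set groups_tau'). v k > 0"
    and eigen: "\<forall>k\<in>\<Union>(set groups_tau').
      (\<Sum>l\<in>\<Union>(set groups_tau'). theta kB J1 J2 J3 T k l * v l) = mu_max kB J1 J2 J3 T * v k"
    using mu_max_lumped_eigenvector by blast
  have "finite (\<Union>(set groups_tau'))" "\<Union>(set groups_tau') \<noteq> {}" by (simp_all add: union_groups_tau')
  then show ?thesis
    unfolding partition_fn'_eq_sum_cycles
    by (rule ln_sum_cycles_limit[where w = "theta kB J1 J2 J3 T" and v = v])
      (simp_all add: theta_pos v_pos eigen)
qed

lemma partition_fn_pos: "partition_fn kB J1 J2 J3 M T > 0"
  unfolding partition_fn_eq_sum_cycles union_groups_tau by (rule sum_cycles_pos) (simp_all add: theta_pos)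

lemma partition_fn'_pos: "partition_fn' kB J1 J2 J3 M T > 0"
  unfolding partition_fn'_eq_sum_cycles union_groups_tau' by (rule sum_cycles_pos) (simp_all add: theta_pos)

lemma ln_partition_fn_per_site_limit:
  "(\<lambda>M. ln (partition_fn kB J1 J2 J3 M T) / (4 * real M)) \<longlonglongrightarrow> ln (lambda_max kB J1 J2 J3 T) / 4"
  using tendsto_divide[OF ln_partition_fn_limit tendsto_const, of 4]
  by (simp add: divide_divide_eq_left mult.commute)

lemma free_energy_eq: "free_energy kB J1 J2 J3 t = - kB * t / 4 * ln (lambda_max kB J1 J2 J3 t)"
  unfolding free_energy_def using limI[OF ln_partition_fn_per_site_limit] by simp

lemma ln_nonperc_ratio_limit:
  "(\<lambda>M. ln (partition_fn' kB J1 J2 J3 M T / partition_fn kB J1 J2 J3 M T) / real M)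
     \<longlonglongrightarrow> ln (mu_max kB J1 J2 J3 T / lambda_max kB J1 J2 J3 T)"
proof -
  have "(\<lambda>M. ln (partition_fn' kB J1 J2 J3 M T) / real M - ln (partition_fn kB J1 J2 J3 M T) / real M)
      \<longlonglongrightarrow> ln (mu_max kB J1 J2 J3 T) - ln (lambda_max kB J1 J2 J3 T)"
    by (intro tendsto_diff ln_partition_fn'_limit ln_partition_fn_limit)
  moreover have "ln (partition_fn' kB J1 J2 J3 M T) / real M - ln (partition_fn kB J1 J2 J3 M T) / real M
      = ln (partition_fn' kB J1 J2 J3 M T / partition_fn kB J1 J2 J3 M T) / real M" for M
    using partition_fn_pos[of kB J1 J2 J3 M T] partition_fn'_pos[of kB J1 J2 J3 M T]
    by (simp add: ln_div diff_divide_distrib)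
  moreover have "ln (mu_max kB J1 J2 J3 T) - ln (lambda_max kB J1 J2 J3 T)
      = ln (mu_max kB J1 J2 J3 T / lambda_max kB J1 J2 J3 T)"
    using lambda_max_pos[of kB J1 J2 J3 T] mu_max_pos[of kB J1 J2 J3 T] by (simp add: ln_div)
  ultimately show ?thesis by simp
qed

lemma lambda_max_has_derivative:
  assumes kB: "kB > 0"
  obtains L where "\<And>t. t > 0 \<Longrightarrow> (lambda_max kB J1 J2 J3 has_real_derivative L t) (at t)"
    and "\<And>t. t > 0 \<Longrightarrow> L field_differentiable (at t)"
proof -
  define E where "E i l = cube_energy J1 J2 J3 (state_spin (rows_tau ! i)) (state_spin l)" for i l
  define a where "a i j s = (\<Sum>l\<in>groups_tau ! j. theta kB J1 J2 J3 s (rows_tau ! i) l)" for i j s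
  define a' where
    "a' i j s = (\<Sum>l\<in>groups_tau ! j. theta kB J1 J2 J3 s (rows_tau ! i) l * (E i l / (kB * s\<^sup>2)))"
    for i j s
  have "((\<lambda>s. theta kB J1 J2 J3 s (rows_tau ! i) l) has_real_derivative
      theta kB J1 J2 J3 s (rows_tau ! i) l * (E i l / (kB * s\<^sup>2))) (at s)" if "s > 0" for s i l
    unfolding theta_def E_def using that kB
    by (auto intro!: derivative_eq_intros simp: field_simps power2_eq_square)
  then have a_der: "(a i j has_real_derivative a' i j s) (at s)" if "s > 0" for s i j
    unfolding a_def a'_def using that by (intro DERIV_sum)
  have a'_diff: "a' i j field_differentiable (at s)" if "s > 0" for s i j
    unfolding a'_def theta_def E_def field_differentiable_def using that kB
    by (intro exI) (auto intro!: derivative_eq_intros)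
  have a_pos: "a i j s > 0" if "j < 4" for i j s
    unfolding a_def using nth_mem[of j groups_tau] that groups_tau_blocks
    by (intro sum_pos) (auto simp: length_groups_tau theta_pos)
  have "\<exists>L. \<forall>s\<in>{0<..}. ((\<lambda>s. largest_real_eig (mat 4 4 (\<lambda>(i, j). a i j s))) has_real_derivative L s) (at s)
      \<and> L field_differentiable (at s)"
    by (rule perron_root_differentiable[where 'n = 4 and a' = a']) (simp_all add: a_pos a_der a'_diff)
  moreover have "lambda_max kB J1 J2 J3 = (\<lambda>s. largest_real_eig (mat 4 4 (\<lambda>(i, j). a i j s)))"
    by (simp add: fun_eq_iff lambda_max_def tau_mat_def a_def)
  ultimately show thesis using that by auto
qed

lemma quarter_ln_lambda_max_has_derivative:
  assumes kB: "kB > 0"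
  obtains G where "\<And>t. t > 0 \<Longrightarrow> ((\<lambda>t. ln (lambda_max kB J1 J2 J3 t) / 4) has_real_derivative G t) (at t)"
    and "\<And>t. t > 0 \<Longrightarrow> G field_differentiable (at t)"
proof -
  obtain L where L: "\<And>t. t > 0 \<Longrightarrow> (lambda_max kB J1 J2 J3 has_real_derivative L t) (at t)"
    and L_diff: "\<And>t. t > 0 \<Longrightarrow> L field_differentiable (at t)"
    using lambda_max_has_derivative[OF kB] by blast
  note pos = lambda_max_pos[of kB J1 J2 J3]
  show thesis
  proof (rule that[of "\<lambda>t. L t / (4 * lambda_max kB J1 J2 J3 t)"])
    fix t :: real assume t: "t > 0"
    show "((\<lambda>t. ln (lambda_max kB J1 J2 J3 t) / 4) has_real_derivative
        L t / (4 * lambda_max kB J1 J2 J3 t)) (at t)"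
      using L[OF t] pos[of t] by (auto intro!: derivative_eq_intros simp: field_simps)
    have "(\<lambda>t. 4 * lambda_max kB J1 J2 J3 t) field_differentiable (at t)"
      using L[OF t] unfolding field_differentiable_def by (auto intro!: derivative_eq_intros)
    then show "(\<lambda>t. L t / (4 * lambda_max kB J1 J2 J3 t)) field_differentiable (at t)"
      using L_diff[OF t] pos[of t] by (intro field_differentiable_divide) auto
  qed
qed

lemma internal_energy_eq:
  assumes kB: "kB > 0" and t: "t > 0"
  shows "internal_energy kB J1 J2 J3 t = kB * t\<^sup>2 * deriv (\<lambda>t. ln (lambda_max kB J1 J2 J3 t) / 4) t"
proof -
  let ?g = "\<lambda>t. ln (lambda_max kB J1 J2 J3 t) / 4"
  obtain G where G: "(?g has_real_derivative G) (at t)"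
    using quarter_ln_lambda_max_has_derivative[OF kB, of J1 J2 J3] t by metis
  have "eventually (\<lambda>u. u > 0) (nhds t)" using eventually_nhds_in_open[of "{0<..}" t] t by simp
  then have "eventually (\<lambda>u. free_energy kB J1 J2 J3 u / u = - kB * ?g u) (nhds t)"
    by eventually_elim (simp add: free_energy_eq)
  then have "deriv (\<lambda>u. free_energy kB J1 J2 J3 u / u) t = deriv (\<lambda>u. - kB * ?g u) t"
    by (rule deriv_cong_ev) (rule refl)
  also have "\<dots> = - kB * G" by (rule DERIV_imp_deriv) (rule DERIV_cmult[OF G])
  finally show ?thesis unfolding internal_energy_def DERIV_imp_deriv[OF G] by simp
qed

lemma heat_capacity_eq:
  fixes J1 J2 J3 :: real
  assumes kB: "kB > 0" and T: "T > 0"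
  defines "g \<equiv> \<lambda>t. ln (lambda_max kB J1 J2 J3 t) / 4"
  shows "heat_capacity kB J1 J2 J3 T = 2 * kB * T * deriv g T + kB * T\<^sup>2 * deriv (deriv g) T"
proof -
  obtain G where G: "\<And>t. t > 0 \<Longrightarrow> (g has_real_derivative G t) (at t)"
    and G_diff: "\<And>t. t > 0 \<Longrightarrow> G field_differentiable (at t)"
    using quarter_ln_lambda_max_has_derivative[OF kB, of J1 J2 J3] unfolding g_def by blast
  have dg: "deriv g t = G t" if "t > 0" for t using G[OF that] by (rule DERIV_imp_deriv)
  obtain G' where G': "(G has_real_derivative G') (at T)"
    using G_diff[OF T] unfolding field_differentiable_def by blast
  have near: "eventually (\<lambda>u. u > 0) (nhds T)" using eventually_nhds_in_open[of "{0<..}" T] T by simp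
  then have "deriv (deriv g) T = deriv G T" by (intro deriv_cong_ev) (auto elim!: eventually_mono simp: dg)
  also have "\<dots> = G'" by (rule DERIV_imp_deriv[OF G'])
  finally have ddg: "deriv (deriv g) T = G'" .
  from near have "eventually (\<lambda>u. internal_energy kB J1 J2 J3 u = kB * u\<^sup>2 * G u) (nhds T)"
    by eventually_elim (simp add: internal_energy_eq[OF kB] dg flip: g_def)
  then have "heat_capacity kB J1 J2 J3 T = deriv (\<lambda>u. kB * u\<^sup>2 * G u) T"
    unfolding heat_capacity_def by (rule deriv_cong_ev) (rule refl)
  also have "\<dots> = 2 * kB * T * G T + kB * T\<^sup>2 * G'"
    by (rule DERIV_imp_deriv) (auto intro!: derivative_eq_intros G' simp: algebra_simps)
  finally show ?thesis using dg[OF T] ddg by simp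
qed

theorem theorem6:
  fixes kB J1 J2 J3 T :: real
  assumes "kB > 0" and "T > 0"
  defines "g \<equiv> (\<lambda>t. ln (lambda_max kB J1 J2 J3 t) / 4)"
  shows "((\<lambda>M. ln (partition_fn kB J1 J2 J3 M T) / (4 * real M)) \<longlonglongrightarrow> g T)
    \<and> free_energy kB J1 J2 J3 T = - kB * T / 4 * ln (lambda_max kB J1 J2 J3 T)
    \<and> internal_energy kB J1 J2 J3 T = kB * (T ^ 2) * deriv g T
    \<and> heat_capacity kB J1 J2 J3 T = 2 * kB * T * deriv g T + kB * (T ^ 2) * deriv (deriv g) T
    \<and> ((\<lambda>M. ln (partition_fn' kB J1 J2 J3 M T / partition_fn kB J1 J2 J3 M T) / real M)
           \<longlonglongrightarrow> ln (mu_max kB J1 J2 J3 T / lambda_max kB J1 J2 J3 T))"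
  unfolding g_def
  by (intro conjI ln_partition_fn_per_site_limit free_energy_eq internal_energy_eq[OF assms(1,2)]
      heat_capacity_eq[OF assms(1,2)] ln_nonperc_ratio_limit)

end
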